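(* Let $\mathcal{A}=\{H_1,\dots,H_n\}$ be an arrangement of $n$ distinct lines in $\mathbb{P}^2_{\mathbb{C}}$ and assume $|H_n\cap \operatorname{mult}(\mathcal{A})|\le 2$. Set $\mathcal{A}'=\{H_1,\dots,H_{n-1}\}$, $I=I(\mathcal{A})$, $I'=I(\mathcal{A}')$. If $\mathcal{R}(I')$ is irreducible (in the Zariski topology), then $\mathcal{R}(I)$ is also irreducible.
   Context: Each line $H_i=\{a_ix+b_iy+c_iz=0\}$ is identified with the point $(a_i:b_i:c_i)$ of the dual plane $(\mathbb{P}^2)^*$, and $\det(H_i,H_j,H_k)$ denotes the determinant of the $3\times 3$ matrix with rows $(a_i,b_i,c_i),(a_j,b_j,c_j),(a_k,b_k,c_k)$ (its vanishing is well defined and equivalent to $H_i\cap H_j\cap H_k\ne\emptyset$). The incidence of an arrangement $\mathcal{A}=\{H_1,\dots,H_n\}$ is $I(\mathcal{A})=\{\{i,j,k\}\subset\{1,\dots,n\}$ with $i,j,k$ distinct $: H_i\cap H_j\cap H_k\neq\emptyset\}$. For a set $I$ of 3-element subsets of $\{1,\dots,n\}$, the realization space is $\mathcal{R}(I)=\{(H_1,\dots,H_n)\in((\mathbb{P}^2)^* )^n : H_i\ne H_j \text{ for } i\ne j,\ \det(H_i,H_j,H_k)=0 \text{ for }\{i,j,k\}\in I,\ \det(H_i,H_j,H_k)\ne 0\text{ for }\{i,j,k\}\notin I\}$, a quasi-projective variety with its Zariski topology. For an arrangement $\mathcal{A}$, $\operatorname{mult}(\mathcal{A})$ is the set of points of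 $\mathbb{P}^2$ lying on at least three lines of $\mathcal{A}$ (multiple points). *)

theory Defs
  imports "HOL-Analysis.Analysis"
begin

(* Points of P^2 and of the dual plane (P^2)^*: 1-dimensional subspaces of C^3,
   given by a nonzero representative vector. *)
definition proj_pt :: "complex^3 \<Rightarrow> (complex^3) set" where
  "proj_pt v = {c *s v | c. True}"

definition P2 :: "(complex^3) set set" where
  "P2 = {proj_pt v | v. v \<noteq> 0}"

definition pair3 :: "complex^3 \<Rightarrow> complex^3 \<Rightarrow> complex" where
  "pair3 a p = (\<Sum>k\<in>UNIV. a $ k * p $ k)"

definition on_line :: "(complex^3) set \<Rightarrow> (complex^3) set \<Rightarrow> bool" where
  "on_line p H = (\<exists>a v. a \<noteq> 0 \<and> v \<noteq> 0 \<and> H = proj_pt a \<and> p = proj_pt v \<and> pair3 a v = 0)"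

definition det0 :: "(complex^3) set \<Rightarrow> (complex^3) set \<Rightarrow> (complex^3) set \<Rightarrow> bool" where
  "det0 L1 L2 L3 = (\<exists>v1 v2 v3. v1 \<noteq> 0 \<and> v2 \<noteq> 0 \<and> v3 \<noteq> 0 \<and>
      L1 = proj_pt v1 \<and> L2 = proj_pt v2 \<and> L3 = proj_pt v3 \<and>
      det (vector [v1, v2, v3] :: complex^3^3) = 0)"

definition mult_pts :: "nat \<Rightarrow> (nat \<Rightarrow> (complex^3) set) \<Rightarrow> (complex^3) set set" where
  "mult_pts n H = {p \<in> P2. 3 \<le> card {i \<in> {1..n}. on_line p (H i)}}"

definition incidence :: "nat \<Rightarrow> (nat \<Rightarrow> (complex^3) set) \<Rightarrow> nat set set" where
  "incidence n H = {T. \<exists>i j k. T = {i, j, k} \<and> i \<in> {1..n} \<and> j \<in> {1..n} \<and> k \<in> {1..n} \<and>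
      i \<noteq> j \<and> i \<noteq> k \<and> j \<noteq> k \<and>
      (\<exists>p \<in> P2. on_line p (H i) \<and> on_line p (H j) \<and> on_line p (H k))}"

definition Pspace :: "nat \<Rightarrow> (nat \<Rightarrow> (complex^3) set) set" where
  "Pspace n = PiE {1..n} (\<lambda>_. P2)"

definition realization :: "nat \<Rightarrow> nat set set \<Rightarrow> (nat \<Rightarrow> (complex^3) set) set" where
  "realization n I = {G \<in> Pspace n. inj_on G {1..n} \<and>
     (\<forall>i\<in>{1..n}. \<forall>j\<in>{1..n}. \<forall>k\<in>{1..n}. i \<noteq> j \<and> i \<noteq> k \<and> j \<noteq> k \<longrightarrow>
        (det0 (G i) (G j) (G k) \<longleftrightarrow> {i, j, k} \<in> I))}"

inductive_set polyfun :: "nat \<Rightarrow> ((nat \<Rightarrow> complex^3) \<Rightarrow> complex) set" for n :: nat where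
  const: "(\<lambda>x. c) \<in> polyfun n"
| coord: "i \<in> {1..n} \<Longrightarrow> (\<lambda>x. x i $ k) \<in> polyfun n"
| add: "f \<in> polyfun n \<Longrightarrow> g \<in> polyfun n \<Longrightarrow> (\<lambda>x. f x + g x) \<in> polyfun n"
| mul: "f \<in> polyfun n \<Longrightarrow> g \<in> polyfun n \<Longrightarrow> (\<lambda>x. f x * g x) \<in> polyfun n"

definition multihom :: "nat \<Rightarrow> ((nat \<Rightarrow> complex^3) \<Rightarrow> complex) \<Rightarrow> bool" where
  "multihom n f = (\<exists>d :: nat \<Rightarrow> nat. \<forall>c x. f (\<lambda>i. c i *s x i) = (\<Prod>i\<in>{1..n}. c i ^ d i) * f x)"

definition zclosed :: "nat \<Rightarrow> (nat \<Rightarrow> (complex^3) set) set \<Rightarrow> bool" where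
  "zclosed n C = (\<exists>F. (\<forall>f\<in>F. f \<in> polyfun n \<and> multihom n f) \<and>
     C = {G \<in> Pspace n. \<forall>x. (\<forall>i\<in>{1..n}. x i \<noteq> 0 \<and> G i = proj_pt (x i)) \<longrightarrow> (\<forall>f\<in>F. f x = 0)})"

definition zirreducible :: "nat \<Rightarrow> (nat \<Rightarrow> (complex^3) set) set \<Rightarrow> bool" where
  "zirreducible n S = (S \<noteq> {} \<and> (\<forall>C1 C2. zclosed n C1 \<and> zclosed n C2 \<and> S \<subseteq> C1 \<union> C2 \<longrightarrow>
      S \<subseteq> C1 \<or> S \<subseteq> C2))"

end

theory Submission
  imports Defs "HOL-Computational_Algebra.Polynomial"
begin

(* Write X = R(I), X' = R(I') and let M be the set of multiple points on H_n.  Forgetting the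
   last line maps X into X'; the fibre over a point of X' consists of the admissible last lines:
   - M = {}: all lines off finitely many hyperplanes of the coordinate space C^3;
   - M = {p}: the lines of the pencil through p (p depends polynomially on the old lines), off
     finitely many hyperplanes;
   - M = {p, q}: only the line through p and q, admissible over a nonempty open subset of X'.
   A fibration criterion (irreducible_by_fibres) shows that such a map with irreducible base and
   "irreducible" fibres has irreducible source. *)

section \<open>Cross products and triple products on \<open>\<complex>\<^sup>3\<close>\<close>

definition cross :: "complex^3 \<Rightarrow> complex^3 \<Rightarrow> complex^3" where
  "cross u v = vector [u$2 * v$3 - u$3 * v$2, u$3 * v$1 - u$1 * v$3, u$1 * v$2 - u$2 * v$1]"

lemma cross_nth [simp]:
  "cross u v $ 1 = u$2 * v$3 - u$3 * v$2"
  "cross u v $ 2 = u$3 * v$1 - u$1 * v$3"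
  "cross u v $ 3 = u$1 * v$2 - u$2 * v$1"
  by (simp_all add: cross_def)

lemma pair3_expand: "pair3 a p = a$1 * p$1 + a$2 * p$2 + a$3 * p$3"
  by (simp add: pair3_def sum_3)

lemma vec3_eq_iff: "(u::complex^3) = v \<longleftrightarrow> u$1 = v$1 \<and> u$2 = v$2 \<and> u$3 = v$3"
  by (simp add: vec_eq_iff forall_3)

lemma vec3_zero_iff: "(u::complex^3) = 0 \<longleftrightarrow> u$1 = 0 \<and> u$2 = 0 \<and> u$3 = 0"
  by (simp add: vec3_eq_iff)

lemma pair3_commute: "pair3 a b = pair3 b a"
  by (simp add: pair3_expand algebra_simps)

lemma pair3_scale_left [simp]: "pair3 (c *s a) b = c * pair3 a b"
  by (simp add: pair3_expand algebra_simps)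

lemma pair3_scale_right [simp]: "pair3 a (c *s b) = c * pair3 a b"
  by (simp add: pair3_expand algebra_simps)

lemma pair3_add_right: "pair3 a (b + d) = pair3 a b + pair3 a d"
  by (simp add: pair3_expand algebra_simps)

lemma pair3_zero [simp]: "pair3 a 0 = 0" "pair3 0 a = 0"
  by (simp_all add: pair3_expand)

lemma cross_scale_left [simp]: "cross (c *s u) v = c *s cross u v"
  by (simp add: vec3_eq_iff algebra_simps)

lemma cross_scale_right [simp]: "cross u (c *s v) = c *s cross u v"
  by (simp add: vec3_eq_iff algebra_simps)

lemma cross_add_right: "cross u (v + w) = cross u v + cross u w"
  by (simp add: vec3_eq_iff algebra_simps)

lemma cross_self [simp]: "cross u u = 0"
  by (simp add: vec3_eq_iff algebra_simps)

lemma cross_antisym: "cross u v = - cross v u"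
  by (simp add: vec3_eq_iff algebra_simps)

lemma cross_zero [simp]: "cross u 0 = 0" "cross 0 u = 0"
  by (simp_all add: vec3_eq_iff)

lemma pair3_cross_orth [simp]:
  "pair3 (cross u v) u = 0" "pair3 (cross u v) v = 0"
  "pair3 u (cross u v) = 0" "pair3 v (cross u v) = 0"
  by (simp_all add: pair3_expand algebra_simps)

lemma triple_rotate: "pair3 (cross u v) w = pair3 (cross v w) u"
  by (simp add: pair3_expand algebra_simps)

lemma triple_assoc: "pair3 a (cross b c) = pair3 (cross a b) c"
  by (simp add: pair3_expand algebra_simps)

lemma cross_cross_left: "cross (cross u v) z = pair3 u z *s v - pair3 v z *s u"
  by (simp add: vec3_eq_iff pair3_expand algebra_simps)

lemma cross_cross_right: "cross a (cross u v) = pair3 a v *s u - pair3 a u *s v"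
  by (simp add: vec3_eq_iff pair3_expand algebra_simps)

lemma det_vector_triple: "det (vector [u, v, w] :: complex^3^3) = pair3 (cross u v) w"
  by (simp add: det_3 pair3_expand algebra_simps)

lemma cross_zero_imp_parallel:
  assumes "A \<noteq> 0" "cross A z = 0" shows "\<exists>c. z = c *s A"
proof -
  have e: "A$2 * z$3 = A$3 * z$2" "A$3 * z$1 = A$1 * z$3" "A$1 * z$2 = A$2 * z$1"
    using assms(2) by (simp_all add: vec3_eq_iff)
  consider "A$1 \<noteq> 0" | "A$2 \<noteq> 0" | "A$3 \<noteq> 0" using assms(1) by (auto simp: vec3_zero_iff)
  then show ?thesis
  proof cases
    case 1 show ?thesis
      by (rule exI[of _ "z$1 / A$1"]) (use 1 e in \<open>simp add: vec3_eq_iff field_simps\<close>)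
  next
    case 2 show ?thesis
      by (rule exI[of _ "z$2 / A$2"]) (use 2 e in \<open>simp add: vec3_eq_iff field_simps\<close>)
  next
    case 3 show ?thesis
      by (rule exI[of _ "z$3 / A$3"]) (use 3 e in \<open>simp add: vec3_eq_iff field_simps\<close>)
  qed
qed

lemma cross_nonzero_indep:
  assumes "cross u v \<noteq> 0" "a *s u + b *s v = 0" shows "a = 0 \<and> b = 0"
proof -
  have "cross u (a *s u + b *s v) = 0" using assms by simp
  hence "b *s cross u v = 0" by (simp add: cross_add_right)
  hence b: "b = 0" using assms(1) by (simp add: vec3_zero_iff) metis
  have "u \<noteq> 0" using assms(1) by auto
  with assms b have "a = 0" by (simp add: vec3_zero_iff) blast
  with b show ?thesis by simp
qed

lemma orth_both_parallel_cross:
  assumes "cross a b \<noteq> 0" "pair3 a v = 0" "pair3 b v = 0" shows "\<exists>c. v = c *s cross a b"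
proof -
  have "cross (cross a b) v = 0" using assms by (simp add: cross_cross_left)
  thus ?thesis using cross_zero_imp_parallel assms(1) by blast
qed

lemma exists_orth: "\<exists>v. v \<noteq> 0 \<and> pair3 a v = 0"
proof (cases "a$1 = 0")
  case True thus ?thesis
    by (intro exI[of _ "vector [1, 0, 0]"]) (simp add: vec3_zero_iff pair3_expand)
next
  case False thus ?thesis
    by (intro exI[of _ "vector [- a$2, a$1, 0]"]) (simp add: vec3_zero_iff pair3_expand algebra_simps)
qed

lemma exists_common_orth: "\<exists>v. v \<noteq> 0 \<and> pair3 a v = 0 \<and> pair3 b v = 0"
proof (cases "cross a b = 0")
  case False thus ?thesis by (intro exI[of _ "cross a b"]) simp
next
  case True
  show ?thesis
  proof (cases "a = 0")
    case True thus ?thesis using exists_orth[of b] by auto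
  next
    case False
    then obtain c where "b = c *s a" using cross_zero_imp_parallel True by blast
    thus ?thesis using exists_orth[of a] by auto
  qed
qed

lemma exists_orth_of_dependent:
  assumes "a \<noteq> 0" "pair3 (cross a b) c = 0"
  shows "\<exists>v. v \<noteq> 0 \<and> pair3 a v = 0 \<and> pair3 b v = 0 \<and> pair3 c v = 0"
proof (cases "cross a b = 0")
  case False
  have "pair3 c (cross a b) = 0" using assms(2) by (simp add: pair3_commute[of c])
  thus ?thesis using False by (intro exI[of _ "cross a b"]) simp
next
  case True
  then obtain k where k: "b = k *s a" using cross_zero_imp_parallel assms(1) by blast
  obtain v where "v \<noteq> 0" "pair3 a v = 0" "pair3 c v = 0" using exists_common_orth[of a c] by blast
  thus ?thesis using k by (intro exI[of _ v]) simp
qed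

lemma exists_nonorth:
  assumes "P \<noteq> 0" shows "\<exists>e. pair3 P e \<noteq> 0"
proof -
  consider "P$1 \<noteq> 0" | "P$2 \<noteq> 0" | "P$3 \<noteq> 0" using assms by (auto simp: vec3_zero_iff)
  then show ?thesis
  proof cases
    case 1 thus ?thesis by (intro exI[of _ "vector [1, 0, 0]"]) (simp add: pair3_expand)
  next
    case 2 thus ?thesis by (intro exI[of _ "vector [0, 1, 0]"]) (simp add: pair3_expand)
  next
    case 3 thus ?thesis by (intro exI[of _ "vector [0, 0, 1]"]) (simp add: pair3_expand)
  qed
qed

text \<open>The vectors orthogonal to \<open>P \<noteq> 0\<close> are exactly the cross products \<open>P \<times> w\<close>:
  lines through a fixed point of the dual plane form the image of a linear map.\<close>

lemma orth_in_cross_range: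
  assumes "P \<noteq> 0" "pair3 P v = 0" shows "\<exists>w. v = cross P w"
proof -
  obtain e where e: "pair3 P e \<noteq> 0" using exists_nonorth[OF assms(1)] by blast
  have "cross P (cross v e) = pair3 P e *s v" using assms(2) by (simp add: cross_cross_right)
  hence "v = cross P ((1 / pair3 P e) *s cross v e)" using e by simp
  thus ?thesis by blast
qed

lemma cross_cross_nonzero:
  assumes "P \<noteq> 0" "cross P w \<noteq> 0" "pair3 P z = 0 \<Longrightarrow> pair3 z w \<noteq> 0"
  shows "cross (cross P w) z \<noteq> 0"
proof
  assume "cross (cross P w) z = 0"
  hence e: "pair3 P z *s w = pair3 w z *s P" by (simp add: cross_cross_left)
  show False
  proof (cases "pair3 P z = 0")
    case True
    hence "pair3 w z *s P = 0" using e by simp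
    hence "pair3 w z = 0" using assms(1) by (simp add: vec3_zero_iff) metis
    thus False using assms(3) True pair3_commute[of w z] by simp
  next
    case False
    have "w = (1 / pair3 P z) *s (pair3 P z *s w)" using False by simp
    also have "\<dots> = (pair3 w z / pair3 P z) *s P" unfolding e by simp
    finally have "cross P w = 0" by (metis cross_scale_right cross_self vector_smult_rzero)
    thus False using assms(2) by contradiction
  qed
qed

definition represents :: "nat \<Rightarrow> (nat \<Rightarrow> (complex^3) set) \<Rightarrow> (nat \<Rightarrow> complex^3) \<Rightarrow> bool" where
  "represents N G x \<longleftrightarrow> (\<forall>i\<in>{1..N}. x i \<noteq> 0 \<and> G i = proj_pt (x i))"

lemma proj_pt_self: "v \<in> proj_pt v"
  unfolding proj_pt_def by (auto intro: exI[of _ 1])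

lemma proj_pt_scale: "c \<noteq> 0 \<Longrightarrow> proj_pt (c *s u) = proj_pt u"
proof -
  assume c: "c \<noteq> 0"
  have "\<exists>e. d *s (c *s u) = e *s u" for d
    by (rule exI[of _ "d * c"]) simp
  moreover have "\<exists>e. d *s u = e *s (c *s u)" for d
    by (rule exI[of _ "d / c"]) (simp add: c)
  ultimately show ?thesis unfolding proj_pt_def by blast
qed

lemma proj_pt_eq_scale:
  assumes "u \<noteq> 0" "v \<noteq> 0" "proj_pt u = proj_pt v" shows "\<exists>c. c \<noteq> 0 \<and> v = c *s u"
proof -
  have "v \<in> proj_pt u" using assms proj_pt_self by metis
  then obtain c where "v = c *s u" unfolding proj_pt_def by auto
  with assms show ?thesis by (intro exI[of _ c]) auto
qed

lemma proj_pt_eq_iff: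
  assumes "u \<noteq> 0" "v \<noteq> 0" shows "proj_pt u = proj_pt v \<longleftrightarrow> cross u v = 0"
proof
  assume "proj_pt u = proj_pt v"
  then obtain c where "v = c *s u" using proj_pt_eq_scale assms by blast
  thus "cross u v = 0" by simp
next
  assume "cross u v = 0"
  then obtain c where c: "v = c *s u" using cross_zero_imp_parallel assms by blast
  with assms have "c \<noteq> 0" by auto
  with c show "proj_pt u = proj_pt v" by (simp add: proj_pt_scale)
qed

lemma P2_iff: "L \<in> P2 \<longleftrightarrow> (\<exists>v. v \<noteq> 0 \<and> L = proj_pt v)"
  unfolding P2_def by auto

lemma represents_exists_P2:
  assumes "\<forall>i\<in>{1..N}. G i \<in> P2" shows "\<exists>x. represents N G x"
proof -
  have "\<forall>i\<in>{1..N}. \<exists>v. v \<noteq> 0 \<and> G i = proj_pt v" using assms P2_iff by blast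
  then obtain x where "\<forall>i\<in>{1..N}. x i \<noteq> 0 \<and> G i = proj_pt (x i)" by metis
  thus ?thesis unfolding represents_def by blast
qed

lemma represents_exists:
  assumes "G \<in> Pspace N" shows "\<exists>x. represents N G x"
proof (rule represents_exists_P2)
  show "\<forall>i\<in>{1..N}. G i \<in> P2" using assms unfolding Pspace_def by (auto simp: PiE_iff)
qed

lemma represents_rescale:
  assumes "represents N G x" "represents N G y"
  shows "\<exists>c. \<forall>i\<in>{1..N}. c i \<noteq> 0 \<and> y i = c i *s x i"
proof -
  have "\<forall>i\<in>{1..N}. \<exists>c. c \<noteq> 0 \<and> y i = c *s x i"
    using assms unfolding represents_def by (metis proj_pt_eq_scale)
  thus ?thesis by metis
qed

lemma on_line_iff:
  assumes "a \<noteq> 0" "v \<noteq> 0" shows "on_line (proj_pt v) (proj_pt a) \<longleftrightarrow> pair3 a v = 0"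
proof
  assume "on_line (proj_pt v) (proj_pt a)"
  then obtain a' v' where h: "a' \<noteq> 0" "v' \<noteq> 0" "proj_pt a = proj_pt a'" "proj_pt v = proj_pt v'"
      "pair3 a' v' = 0"
    unfolding on_line_def by metis
  obtain c where c: "c \<noteq> 0" "a' = c *s a" using proj_pt_eq_scale h assms by metis
  obtain d where d: "d \<noteq> 0" "v' = d *s v" using proj_pt_eq_scale h assms by metis
  show "pair3 a v = 0" using h c d by simp
next
  assume "pair3 a v = 0" thus "on_line (proj_pt v) (proj_pt a)"
    unfolding on_line_def using assms by blast
qed

lemma det0_iff:
  assumes "a \<noteq> 0" "b \<noteq> 0" "c \<noteq> 0"
  shows "det0 (proj_pt a) (proj_pt b) (proj_pt c) \<longleftrightarrow> pair3 (cross a b) c = 0"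
proof
  assume "det0 (proj_pt a) (proj_pt b) (proj_pt c)"
  then obtain a' b' c' where h: "a' \<noteq> 0" "b' \<noteq> 0" "c' \<noteq> 0" "proj_pt a = proj_pt a'"
      "proj_pt b = proj_pt b'" "proj_pt c = proj_pt c'" "pair3 (cross a' b') c' = 0"
    unfolding det0_def det_vector_triple by metis
  obtain x where x: "x \<noteq> 0" "a' = x *s a" using proj_pt_eq_scale h assms by metis
  obtain y where y: "y \<noteq> 0" "b' = y *s b" using proj_pt_eq_scale h assms by metis
  obtain z where z: "z \<noteq> 0" "c' = z *s c" using proj_pt_eq_scale h assms by metis
  show "pair3 (cross a b) c = 0" using h x y z by simp
next
  assume "pair3 (cross a b) c = 0" thus "det0 (proj_pt a) (proj_pt b) (proj_pt c)"
    unfolding det0_def det_vector_triple using assms by blast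
qed

lemma concurrent_iff:
  assumes "a \<noteq> 0" "b \<noteq> 0" "c \<noteq> 0"
  shows "(\<exists>p\<in>P2. on_line p (proj_pt a) \<and> on_line p (proj_pt b) \<and> on_line p (proj_pt c))
     \<longleftrightarrow> pair3 (cross a b) c = 0"
proof
  assume "\<exists>p\<in>P2. on_line p (proj_pt a) \<and> on_line p (proj_pt b) \<and> on_line p (proj_pt c)"
  then obtain p where p: "p \<in> P2" "on_line p (proj_pt a)" "on_line p (proj_pt b)" "on_line p (proj_pt c)"
    by blast
  then obtain v where v: "v \<noteq> 0" "p = proj_pt v" unfolding P2_iff by blast
  have o: "pair3 a v = 0" "pair3 b v = 0" "pair3 c v = 0"
    using on_line_iff[OF assms(1) v(1)] on_line_iff[OF assms(2) v(1)] on_line_iff[OF assms(3) v(1)] p v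
    by auto
  show "pair3 (cross a b) c = 0"
  proof (cases "cross a b = 0")
    case False
    then obtain k where k: "v = k *s cross a b" using orth_both_parallel_cross o by blast
    with v have "k \<noteq> 0" by auto
    moreover have "k * pair3 c (cross a b) = 0" using o(3) k by simp
    ultimately show ?thesis by (simp add: pair3_commute[of c])
  qed simp
next
  assume "pair3 (cross a b) c = 0"
  then obtain v where v: "v \<noteq> 0" "pair3 a v = 0" "pair3 b v = 0" "pair3 c v = 0"
    using exists_orth_of_dependent assms(1) by blast
  have "proj_pt v \<in> P2" using v(1) unfolding P2_iff by blast
  moreover have "on_line (proj_pt v) (proj_pt a)" "on_line (proj_pt v) (proj_pt b)"
      "on_line (proj_pt v) (proj_pt c)"
    using on_line_iff[OF assms(1) v(1)] on_line_iff[OF assms(2) v(1)] on_line_iff[OF assms(3) v(1)] v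
    by auto
  ultimately show "\<exists>p\<in>P2. on_line p (proj_pt a) \<and> on_line p (proj_pt b) \<and> on_line p (proj_pt c)"
    by blast
qed

lemma represents_update:
  assumes "represents (n - 1) G' x" "h \<noteq> 0"
  shows "represents n (G'(n := proj_pt h)) (x(n := h))"
  using assms unfolding represents_def by auto

lemma represents_restrict:
  assumes "represents n G x" shows "represents (n - 1) (G(n := undefined)) x"
  using assms unfolding represents_def by auto

lemma Pspace_update:
  assumes "1 \<le> n" "G' \<in> Pspace (n - 1)" "L \<in> P2" shows "G'(n := L) \<in> Pspace n"
  using assms unfolding Pspace_def by (auto simp: PiE_iff extensional_def)

lemma Pspace_restrict:
  assumes "1 \<le> n" "G \<in> Pspace n" shows "G(n := undefined) \<in> Pspace (n - 1)"
  using assms unfolding Pspace_def by (auto simp: PiE_iff extensional_def)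

section \<open>Zariski closed subsets of ((P^2)^* )^N\<close>

lemma polyfun_local:
  assumes "f \<in> polyfun N" "\<forall>i\<in>{1..N}. x i = y i" shows "f x = f y"
  using assms(1) by induction (use assms(2) in auto)

lemma polyfun_diff: "f \<in> polyfun N \<Longrightarrow> g \<in> polyfun N \<Longrightarrow> (\<lambda>x. f x - g x) \<in> polyfun N"
proof -
  assume "f \<in> polyfun N" "g \<in> polyfun N"
  hence "(\<lambda>x. f x + (\<lambda>x. -1) x * g x) \<in> polyfun N"
    by (intro polyfun.add polyfun.mul polyfun.const)
  thus ?thesis by simp
qed

lemma polyfun_compose:
  assumes "f \<in> polyfun N" "\<forall>i\<in>{1..N}. \<forall>k. (\<lambda>x. \<phi> x i $ k) \<in> polyfun M"
  shows "(\<lambda>x. f (\<phi> x)) \<in> polyfun M"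
  using assms(1)
proof induction
  case (const c) show ?case by (rule polyfun.const)
next
  case (coord i k) thus ?case using assms(2) by auto
next
  case (add f g) thus ?case using polyfun.add by fastforce
next
  case (mul f g) thus ?case using polyfun.mul by fastforce
qed

lemma multihom_mult:
  assumes "multihom N f" "multihom N g" shows "multihom N (\<lambda>x. f x * g x)"
proof -
  obtain d where d: "\<forall>c x. f (\<lambda>i. c i *s x i) = (\<Prod>i\<in>{1..N}. c i ^ d i) * f x"
    using assms unfolding multihom_def by blast
  obtain e where e: "\<forall>c x. g (\<lambda>i. c i *s x i) = (\<Prod>i\<in>{1..N}. c i ^ e i) * g x"
    using assms unfolding multihom_def by blast
  have "(\<Prod>i\<in>{1..N}. c i ^ (d i + e i)) = (\<Prod>i\<in>{1..N}. c i ^ d i) * (\<Prod>i\<in>{1..N}. c i ^ e i)"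
    for c :: "nat \<Rightarrow> complex"
    by (simp add: power_add prod.distrib)
  thus ?thesis unfolding multihom_def using d e
    by (intro exI[of _ "\<lambda>i. d i + e i"]) (simp add: algebra_simps)
qed

lemma multihom_scale_block:
  assumes "multihom N f" "n \<in> {1..N}"
  shows "\<exists>d. \<forall>x c v. f (x(n := c *s v)) = c ^ d * f (x(n := v))"
proof -
  obtain d where d: "\<forall>c x. f (\<lambda>i. c i *s x i) = (\<Prod>i\<in>{1..N}. c i ^ d i) * f x"
    using assms unfolding multihom_def by blast
  have "f (x(n := c *s v)) = c ^ d n * f (x(n := v))" for x c v
  proof -
    have e: "x(n := c *s v) = (\<lambda>i. (if i = n then c else 1) *s (x(n := v)) i)"
      by (auto simp: fun_eq_iff)
    have "(\<Prod>i\<in>{1..N}. (if i = n then c else 1) ^ d i) = (\<Prod>i\<in>{1..N}. if i = n then c ^ d n else 1)"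
      by (rule prod.cong) auto
    also have "\<dots> = c ^ d n" using assms(2) by simp
    finally show ?thesis using d e by metis
  qed
  thus ?thesis by blast
qed

lemma multihom_vanish_indep:
  assumes "f \<in> polyfun N" "multihom N f" "represents N G x" "represents N G y"
  shows "f x = 0 \<longleftrightarrow> f y = 0"
proof -
  obtain c where c: "\<forall>i\<in>{1..N}. c i \<noteq> 0 \<and> y i = c i *s x i"
    using represents_rescale assms by blast
  obtain d where d: "\<forall>c x. f (\<lambda>i. c i *s x i) = (\<Prod>i\<in>{1..N}. c i ^ d i) * f x"
    using assms unfolding multihom_def by blast
  have "f y = f (\<lambda>i. c i *s x i)" using polyfun_local[OF assms(1)] c by auto
  also have "\<dots> = (\<Prod>i\<in>{1..N}. c i ^ d i) * f x" using d by blast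
  finally have "f y = (\<Prod>i\<in>{1..N}. c i ^ d i) * f x" .
  moreover have "(\<Prod>i\<in>{1..N}. c i ^ d i) \<noteq> 0" using c by simp
  ultimately show ?thesis by (metis mult_eq_0_iff)
qed

definition hom_polys :: "nat \<Rightarrow> ((nat \<Rightarrow> complex^3) \<Rightarrow> complex) set \<Rightarrow> bool" where
  "hom_polys N F \<longleftrightarrow> (\<forall>f\<in>F. f \<in> polyfun N \<and> multihom N f)"

definition zero_set :: "nat \<Rightarrow> ((nat \<Rightarrow> complex^3) \<Rightarrow> complex) set \<Rightarrow> (nat \<Rightarrow> (complex^3) set) set" where
  "zero_set N F = {G \<in> Pspace N. \<forall>x. represents N G x \<longrightarrow> (\<forall>f\<in>F. f x = 0)}"

lemma zclosed_iff: "zclosed N C \<longleftrightarrow> (\<exists>F. hom_polys N F \<and> C = zero_set N F)"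
  unfolding zclosed_def zero_set_def hom_polys_def represents_def by blast

lemma zero_set_mem:
  assumes "hom_polys N F" "represents N G x" "G \<in> Pspace N"
  shows "G \<in> zero_set N F \<longleftrightarrow> (\<forall>f\<in>F. f x = 0)"
  using assms multihom_vanish_indep unfolding zero_set_def hom_polys_def by blast

lemma zclosed_Un:
  assumes "zclosed N C1" "zclosed N C2" shows "zclosed N (C1 \<union> C2)"
proof -
  obtain F1 where F1: "hom_polys N F1" "C1 = zero_set N F1" using assms zclosed_iff by blast
  obtain F2 where F2: "hom_polys N F2" "C2 = zero_set N F2" using assms zclosed_iff by blast
  define F where "F = {(\<lambda>x. f x * g x) | f g. f \<in> F1 \<and> g \<in> F2}"
  have hF: "hom_polys N F" using F1 F2 unfolding F_def hom_polys_def
    by (auto intro: polyfun.mul multihom_mult)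
  have "C1 \<union> C2 = zero_set N F"
  proof (intro set_eqI iffI)
    fix G assume "G \<in> C1 \<union> C2"
    thus "G \<in> zero_set N F" using F1 F2 unfolding zero_set_def F_def by auto
  next
    fix G assume G: "G \<in> zero_set N F"
    hence P: "G \<in> Pspace N" unfolding zero_set_def by auto
    obtain x where x: "represents N G x" using represents_exists P by blast
    have "\<forall>f\<in>F. f x = 0" using zero_set_mem[OF hF x P] G by blast
    moreover have "(\<lambda>x. f x * g x) \<in> F" if "f \<in> F1" "g \<in> F2" for f g
      unfolding F_def using that by blast
    ultimately have "\<forall>f\<in>F1. \<forall>g\<in>F2. f x * g x = 0" by fastforce
    hence "(\<forall>f\<in>F1. f x = 0) \<or> (\<forall>g\<in>F2. g x = 0)" by auto
    thus "G \<in> C1 \<union> C2" using zero_set_mem[OF F1(1) x P] zero_set_mem[OF F2(1) x P] F1 F2 by blast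
  qed
  thus ?thesis using hF zclosed_iff by blast
qed

lemma zclosed_empty: "zclosed N {}"
proof -
  have h: "hom_polys N {\<lambda>x. 1}" unfolding hom_polys_def multihom_def
    by (auto intro: polyfun.const exI[of _ "\<lambda>i. 0"])
  have "G \<notin> zero_set N {\<lambda>x. 1}" for G
  proof
    assume G: "G \<in> zero_set N {\<lambda>x. 1}"
    then obtain x where "represents N G x" using represents_exists unfolding zero_set_def by blast
    with G show False unfolding zero_set_def by auto
  qed
  hence "zero_set N {\<lambda>x. 1} = {}" by blast
  thus ?thesis unfolding zclosed_iff using h by (intro exI[of _ "{\<lambda>x. 1}"]) simp
qed

lemma zclosed_UN:
  assumes "finite A" "\<And>i. i \<in> A \<Longrightarrow> zclosed N (C i)" shows "zclosed N (\<Union>i\<in>A. C i)"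
  using assms by (induction A rule: finite_induct) (auto intro: zclosed_Un zclosed_empty)

lemma zirreducible_diff_closed:
  assumes irr: "zirreducible N Y" and Z: "zclosed N Z" and ne: "Y - Z \<noteq> {}"
  shows "zirreducible N (Y - Z)"
proof -
  have split: "\<And>C1 C2. zclosed N C1 \<Longrightarrow> zclosed N C2 \<Longrightarrow> Y \<subseteq> C1 \<union> C2 \<Longrightarrow> Y \<subseteq> C1 \<or> Y \<subseteq> C2"
    using irr unfolding zirreducible_def by blast
  have "Y - Z \<subseteq> C1 \<or> Y - Z \<subseteq> C2" if C: "zclosed N C1" "zclosed N C2" "Y - Z \<subseteq> C1 \<union> C2" for C1 C2
  proof -
    have "Y \<subseteq> (C1 \<union> Z) \<union> C2" using C by auto
    moreover have "zclosed N (C1 \<union> Z)" using C(1) Z by (rule zclosed_Un)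
    ultimately have "Y \<subseteq> C1 \<union> Z \<or> Y \<subseteq> C2" using split C(2) by blast
    moreover have "Y \<subseteq> C1 \<union> Z \<Longrightarrow> Y \<subseteq> C1 \<or> Y \<subseteq> Z" using split C Z by blast
    moreover have "\<not> Y \<subseteq> Z" using ne by auto
    ultimately show ?thesis by auto
  qed
  thus ?thesis using ne unfolding zirreducible_def by blast
qed

definition poly_map :: "nat \<Rightarrow> ((nat \<Rightarrow> complex^3) \<Rightarrow> complex^3) \<Rightarrow> bool" where
  "poly_map M q \<longleftrightarrow> (\<forall>k. (\<lambda>x. q x $ k) \<in> polyfun M)"

definition hom_map :: "nat \<Rightarrow> ((nat \<Rightarrow> complex^3) \<Rightarrow> complex^3) \<Rightarrow> bool" where
  "hom_map M q \<longleftrightarrow> (\<exists>e. \<forall>c x. q (\<lambda>i. c i *s x i) = (\<Prod>i\<in>{1..M}. c i ^ e i) *s q x)"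

lemma poly_map_const: "poly_map M (\<lambda>x. h)"
  unfolding poly_map_def by (auto intro: polyfun.const)

lemma hom_map_const: "hom_map M (\<lambda>x. h)"
  unfolding hom_map_def by (auto intro: exI[of _ "\<lambda>i. 0"])

lemma poly_map_coord: "a \<in> {1..M} \<Longrightarrow> poly_map M (\<lambda>x. x a)"
  unfolding poly_map_def by (auto intro: polyfun.coord)

lemma hom_map_coord:
  assumes "a \<in> {1..M}" shows "hom_map M (\<lambda>x. x a)"
proof -
  have "(\<Prod>i\<in>{1..M}. c i ^ (if i = a then 1 else 0)) = (\<Prod>i\<in>{1..M}. if i = a then c a else 1)"
    for c :: "nat \<Rightarrow> complex"
    by (rule prod.cong) auto
  hence "(\<Prod>i\<in>{1..M}. c i ^ (if i = a then 1 else 0)) = c a" for c :: "nat \<Rightarrow> complex"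
    using assms by simp
  thus ?thesis unfolding hom_map_def by (intro exI[of _ "\<lambda>i. if i = a then 1 else 0"]) simp
qed

lemma poly_map_cross: "poly_map M p \<Longrightarrow> poly_map M q \<Longrightarrow> poly_map M (\<lambda>x. cross (p x) (q x))"
  unfolding poly_map_def
proof (intro allI)
  fix k :: 3
  assume p: "\<forall>k. (\<lambda>x. p x $ k) \<in> polyfun M" and q: "\<forall>k. (\<lambda>x. q x $ k) \<in> polyfun M"
  have m: "\<And>a b. (\<lambda>x. p x $ a * q x $ b) \<in> polyfun M" using p q by (auto intro: polyfun.mul)
  have "\<And>a b c d. (\<lambda>x. p x $ a * q x $ b - p x $ c * q x $ d) \<in> polyfun M"
    using m by (rule polyfun_diff) (use m in auto)
  thus "(\<lambda>x. cross (p x) (q x) $ k) \<in> polyfun M"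
    using exhaust_3[of k] by auto
qed

lemma hom_map_cross:
  assumes "hom_map M p" "hom_map M q" shows "hom_map M (\<lambda>x. cross (p x) (q x))"
proof -
  obtain d where d: "\<forall>c x. p (\<lambda>i. c i *s x i) = (\<Prod>i\<in>{1..M}. c i ^ d i) *s p x"
    using assms unfolding hom_map_def by blast
  obtain e where e: "\<forall>c x. q (\<lambda>i. c i *s x i) = (\<Prod>i\<in>{1..M}. c i ^ e i) *s q x"
    using assms unfolding hom_map_def by blast
  have pr: "(\<Prod>i\<in>{1..M}. c i ^ (d i + e i)) = (\<Prod>i\<in>{1..M}. c i ^ d i) * (\<Prod>i\<in>{1..M}. c i ^ e i)"
    for c :: "nat \<Rightarrow> complex"
    by (simp add: power_add prod.distrib)
  show ?thesis unfolding hom_map_def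
  proof (intro exI allI)
    fix c x
    have "cross (p (\<lambda>i. c i *s x i)) (q (\<lambda>i. c i *s x i))
       = (\<Prod>i\<in>{1..M}. c i ^ d i) *s ((\<Prod>i\<in>{1..M}. c i ^ e i) *s cross (p x) (q x))"
      by (simp add: d e)
    also have "\<dots> = (\<Prod>i\<in>{1..M}. c i ^ (d i + e i)) *s cross (p x) (q x)"
      by (simp only: vector_smult_assoc pr)
    finally show "cross (p (\<lambda>i. c i *s x i)) (q (\<lambda>i. c i *s x i))
       = (\<Prod>i\<in>{1..M}. c i ^ (d i + e i)) *s cross (p x) (q x)" .
  qed
qed

lemma polyfun_pair3: "poly_map M p \<Longrightarrow> poly_map M q \<Longrightarrow> (\<lambda>x. pair3 (p x) (q x)) \<in> polyfun M"
  unfolding poly_map_def pair3_expand by (intro polyfun.add polyfun.mul) auto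

lemma multihom_pair3:
  assumes "hom_map M p" "hom_map M q" shows "multihom M (\<lambda>x. pair3 (p x) (q x))"
proof -
  obtain d where d: "\<forall>c x. p (\<lambda>i. c i *s x i) = (\<Prod>i\<in>{1..M}. c i ^ d i) *s p x"
    using assms unfolding hom_map_def by blast
  obtain e where e: "\<forall>c x. q (\<lambda>i. c i *s x i) = (\<Prod>i\<in>{1..M}. c i ^ e i) *s q x"
    using assms unfolding hom_map_def by blast
  have pr: "(\<Prod>i\<in>{1..M}. c i ^ (d i + e i)) = (\<Prod>i\<in>{1..M}. c i ^ d i) * (\<Prod>i\<in>{1..M}. c i ^ e i)"
    for c :: "nat \<Rightarrow> complex"
    by (simp add: power_add prod.distrib)
  show ?thesis unfolding multihom_def
  proof (intro exI allI)
    fix c x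
    have "pair3 (p (\<lambda>i. c i *s x i)) (q (\<lambda>i. c i *s x i))
       = (\<Prod>i\<in>{1..M}. c i ^ d i) * ((\<Prod>i\<in>{1..M}. c i ^ e i) * pair3 (p x) (q x))"
      by (simp add: d e)
    also have "\<dots> = (\<Prod>i\<in>{1..M}. c i ^ (d i + e i)) * pair3 (p x) (q x)"
      by (simp only: pr mult.assoc)
    finally show "pair3 (p (\<lambda>i. c i *s x i)) (q (\<lambda>i. c i *s x i))
       = (\<Prod>i\<in>{1..M}. c i ^ (d i + e i)) * pair3 (p x) (q x)" .
  qed
qed

lemma polyfun_subst_last:
  assumes "1 \<le> n" "f \<in> polyfun n" "poly_map (n - 1) q"
  shows "(\<lambda>x. f (x(n := q x))) \<in> polyfun (n - 1)"
proof (rule polyfun_compose[OF assms(2)], intro ballI allI)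
  fix i k assume i: "i \<in> {1..n}"
  show "(\<lambda>x. (x(n := q x)) i $ k) \<in> polyfun (n - 1)"
  proof (cases "i = n")
    case True thus ?thesis using assms(3) unfolding poly_map_def by simp
  next
    case False
    hence "i \<in> {1..n-1}" using i by auto
    thus ?thesis using False by (simp add: polyfun.coord)
  qed
qed

lemma multihom_subst_last:
  assumes "1 \<le> n" "multihom n f" "hom_map (n - 1) q"
  shows "multihom (n - 1) (\<lambda>x. f (x(n := q x)))"
proof -
  obtain d where d: "\<forall>c x. f (\<lambda>i. c i *s x i) = (\<Prod>i\<in>{1..n}. c i ^ d i) * f x"
    using assms unfolding multihom_def by blast
  obtain e where e: "\<forall>c x. q (\<lambda>i. c i *s x i) = (\<Prod>i\<in>{1..n-1}. c i ^ e i) *s q x"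
    using assms unfolding hom_map_def by blast
  have U: "{1..n} = insert n {1..n-1}" using assms(1) by auto
  have "f ((\<lambda>i. c i *s x i)(n := q (\<lambda>i. c i *s x i)))
      = (\<Prod>i\<in>{1..n-1}. c i ^ (d i + e i * d n)) * f (x(n := q x))" for c x
  proof -
    define c' where "c' = c(n := \<Prod>i\<in>{1..n-1}. c i ^ e i)"
    have "(\<lambda>i. c i *s x i)(n := q (\<lambda>i. c i *s x i)) = (\<lambda>i. c' i *s (x(n := q x)) i)"
      unfolding c'_def by (auto simp: fun_eq_iff e)
    hence "f ((\<lambda>i. c i *s x i)(n := q (\<lambda>i. c i *s x i))) = (\<Prod>i\<in>{1..n}. c' i ^ d i) * f (x(n := q x))"
      using d by metis
    also have "(\<Prod>i\<in>{1..n}. c' i ^ d i) = c' n ^ d n * (\<Prod>i\<in>{1..n-1}. c' i ^ d i)"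
      unfolding U by (subst prod.insert) auto
    also have "(\<Prod>i\<in>{1..n-1}. c' i ^ d i) = (\<Prod>i\<in>{1..n-1}. c i ^ d i)"
      unfolding c'_def by (rule prod.cong) auto
    also have "c' n ^ d n = (\<Prod>i\<in>{1..n-1}. c i ^ (e i * d n))"
      unfolding c'_def by (simp add: prod_power_distrib power_mult)
    also have "(\<Prod>i\<in>{1..n-1}. c i ^ (e i * d n)) * (\<Prod>i\<in>{1..n-1}. c i ^ d i)
       = (\<Prod>i\<in>{1..n-1}. c i ^ (d i + e i * d n))"
      by (simp add: power_add prod.distrib mult.commute)
    finally show ?thesis .
  qed
  thus ?thesis unfolding multihom_def by (intro exI[of _ "\<lambda>i. d i + e i * d n"]) auto
qed

definition vanishing_locus :: "nat \<Rightarrow> ((nat \<Rightarrow> complex^3) \<Rightarrow> complex^3) \<Rightarrow> (nat \<Rightarrow> (complex^3) set) set" where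
  "vanishing_locus M v = zero_set M (range (\<lambda>k x. v x $ k))"

lemma hom_polys_components:
  "poly_map M v \<Longrightarrow> hom_map M v \<Longrightarrow> hom_polys M (range (\<lambda>k x. v x $ k))"
  unfolding hom_polys_def poly_map_def hom_map_def multihom_def by auto

lemma vanishing_locus_closed: "poly_map M v \<Longrightarrow> hom_map M v \<Longrightarrow> zclosed M (vanishing_locus M v)"
  unfolding vanishing_locus_def zclosed_iff using hom_polys_components by blast

lemma vanishing_locus_mem:
  "poly_map M v \<Longrightarrow> hom_map M v \<Longrightarrow> represents M G x \<Longrightarrow> G \<in> Pspace M \<Longrightarrow>
    G \<in> vanishing_locus M v \<longleftrightarrow> v x = 0"
  unfolding vanishing_locus_def using zero_set_mem[OF hom_polys_components] by (auto simp: vec_eq_iff)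

lemma zero_set_single_closed: "g \<in> polyfun M \<Longrightarrow> multihom M g \<Longrightarrow> zclosed M (zero_set M {g})"
  unfolding zclosed_iff hom_polys_def by blast

lemma zero_set_single_mem:
  "g \<in> polyfun M \<Longrightarrow> multihom M g \<Longrightarrow> represents M G x \<Longrightarrow> G \<in> Pspace M \<Longrightarrow>
    G \<in> zero_set M {g} \<longleftrightarrow> g x = 0"
  using zero_set_mem[of M "{g}"] unfolding hom_polys_def by auto

section \<open>Generic vanishing of polynomials on \<open>\<complex>\<^sup>3\<close>\<close>

definition poly_on_lines :: "(complex^3 \<Rightarrow> complex) \<Rightarrow> bool" where
  "poly_on_lines g \<longleftrightarrow> (\<forall>w0 d. \<exists>p. \<forall>s. g (w0 + s *s d) = poly p s)"

lemma polyfun_on_line: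
  assumes "f \<in> polyfun N"
  shows "\<exists>p. \<forall>s. f (x(n := s *s u + v)) = poly p s"
  using assms
proof induction
  case (const c) show ?case by (rule exI[of _ "[:c:]"]) simp
next
  case (coord i k)
  show ?case
  proof (cases "i = n")
    case True thus ?thesis by (intro exI[of _ "[:v $ k, u $ k:]"]) (simp add: algebra_simps)
  next
    case False thus ?thesis by (intro exI[of _ "[:x i $ k:]"]) simp
  qed
next
  case (add f g)
  then obtain p q where "\<forall>s. f (x(n := s *s u + v)) = poly p s" "\<forall>s. g (x(n := s *s u + v)) = poly q s"
    by blast
  note pq = this
  show ?case
  proof (intro exI allI)
    fix s show "f (x(n := s *s u + v)) + g (x(n := s *s u + v)) = poly (p + q) s"
      by (simp only: poly_add pq)
  qed
next
  case (mul f g)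
  then obtain p q where "\<forall>s. f (x(n := s *s u + v)) = poly p s" "\<forall>s. g (x(n := s *s u + v)) = poly q s"
    by blast
  note pq = this
  show ?case
  proof (intro exI allI)
    fix s show "f (x(n := s *s u + v)) * g (x(n := s *s u + v)) = poly (p * q) s"
      by (simp only: poly_mult pq)
  qed
qed

lemma poly_on_lines_linear:
  assumes "f \<in> polyfun N" "\<And>u v s. L (u + s *s v) = L u + s *s L v"
  shows "poly_on_lines (\<lambda>w. f (x(n := L w)))"
  unfolding poly_on_lines_def
proof (intro allI)
  fix w0 d
  obtain p where p: "\<forall>s. f (x(n := s *s L d + L w0)) = poly p s"
    using polyfun_on_line[OF assms(1)] by blast
  have "L (w0 + s *s d) = s *s L d + L w0" for s using assms(2) by (simp add: add.commute)
  thus "\<exists>p. \<forall>s. f (x(n := L (w0 + s *s d))) = poly p s" using p by metis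
qed

text \<open>Finitely many hyperplanes do not cover \<open>\<complex>\<^sup>3\<close>: the moment curve \<open>(1, u, u\<^sup>2)\<close>
  meets each of them in at most two points.\<close>

lemma exists_generic:
  assumes "finite S" "0 \<notin> S" shows "\<exists>d. \<forall>r\<in>S. pair3 r d \<noteq> 0"
proof -
  define pp where "pp r = [:r$1, r$2, r$3:]" for r :: "complex^3"
  have pp: "pair3 r (vector [1, u, u^2]) = poly (pp r) u" for r u
    unfolding pp_def by (simp add: pair3_expand algebra_simps power2_eq_square)
  have nz: "pp r \<noteq> 0" if "r \<in> S" for r
  proof
    assume "pp r = 0"
    hence "r = 0" unfolding pp_def by (simp add: vec3_zero_iff)
    with that assms show False by simp
  qed
  have "finite (\<Union>r\<in>S. {u. poly (pp r) u = 0})"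
    using assms(1) nz poly_roots_finite by blast
  hence "\<exists>u. u \<notin> (\<Union>r\<in>S. {u. poly (pp r) u = 0})"
    using ex_new_if_finite[OF infinite_UNIV_char_0] by blast
  then obtain u where "\<forall>r\<in>S. poly (pp r) u \<noteq> 0" by blast
  thus ?thesis using pp by metis
qed

text \<open>A product of two polynomial functions that vanishes off finitely many hyperplanes vanishes
  everywhere: on a line in a generic direction it is a univariate polynomial with infinitely many
  roots.\<close>

lemma product_vanishes_everywhere:
  assumes lp1: "poly_on_lines g1" and lp2: "poly_on_lines g2" and S: "finite S" "0 \<notin> S"
    and van: "\<And>w. \<forall>r\<in>S. pair3 r w \<noteq> 0 \<Longrightarrow> g1 w * g2 w = 0"
  shows "g1 w0 * g2 w0 = 0"
proof -
  obtain d where d: "\<forall>r\<in>S. pair3 r d \<noteq> 0" using exists_generic S by blast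
  obtain p1 where p1: "\<forall>s. g1 (w0 + s *s d) = poly p1 s" using lp1 unfolding poly_on_lines_def by blast
  obtain p2 where p2: "\<forall>s. g2 (w0 + s *s d) = poly p2 s" using lp2 unfolding poly_on_lines_def by blast
  define B where "B = (\<Union>r\<in>S. {s. pair3 r w0 + s * pair3 r d = 0})"
  have "{s. pair3 r w0 + s * pair3 r d = 0} \<subseteq> {- pair3 r w0 / pair3 r d}" if "r \<in> S" for r
    using d that by (auto simp: field_simps eq_neg_iff_add_eq_0)
  hence fB: "finite B" unfolding B_def using S(1)
    by (meson finite.emptyI finite_UN_I finite_insert finite_subset)
  have "poly (p1 * p2) s = 0" if "s \<notin> B" for s
  proof -
    have "\<forall>r\<in>S. pair3 r (w0 + s *s d) \<noteq> 0" using that unfolding B_def by (auto simp: pair3_add_right)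
    hence "g1 (w0 + s *s d) * g2 (w0 + s *s d) = 0" by (rule van)
    thus ?thesis using p1 p2 by simp
  qed
  hence "UNIV - B \<subseteq> {s. poly (p1 * p2) s = 0}" by auto
  moreover have "infinite (UNIV - B)" using fB infinite_UNIV_char_0[where 'a=complex]
    by (metis Diff_infinite_finite)
  ultimately have "infinite {s. poly (p1 * p2) s = 0}" using infinite_super by blast
  hence "p1 * p2 = 0" using poly_roots_finite by blast
  hence "poly p1 0 * poly p2 0 = 0" by (metis poly_0 poly_mult)
  moreover have "g1 w0 = poly p1 0" "g2 w0 = poly p2 0"
    using p1[rule_format, of 0] p2[rule_format, of 0] by simp_all
  ultimately show ?thesis by simp
qed

text \<open>If a product of two polynomial functions vanishes identically, so does one factor:
  restrict both to the line through a non-zero of each.\<close>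

lemma product_zero_imp_factor_zero:
  assumes lp1: "poly_on_lines g1" and lp2: "poly_on_lines g2" and zero: "\<And>w. g1 w * g2 w = 0"
  shows "(\<forall>w. g1 w = 0) \<or> (\<forall>w. g2 w = 0)"
proof (rule ccontr)
  assume "\<not> ?thesis"
  then obtain w1 w2 where w: "g1 w1 \<noteq> 0" "g2 w2 \<noteq> 0" by blast
  obtain p1 where p1: "\<forall>s. g1 (w1 + s *s (w2 - w1)) = poly p1 s"
    using lp1 unfolding poly_on_lines_def by blast
  obtain p2 where p2: "\<forall>s. g2 (w1 + s *s (w2 - w1)) = poly p2 s"
    using lp2 unfolding poly_on_lines_def by blast
  have "poly (p1 * p2) s = 0" for s
    using p1 p2 zero[of "w1 + s *s (w2 - w1)"] by simp
  hence "p1 * p2 = 0" using poly_all_0_iff_0 by blast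
  moreover have "poly p1 0 \<noteq> 0" using p1[rule_format, of 0] w by simp
  moreover have "poly p2 1 \<noteq> 0" using p2[rule_format, of 1] w by simp
  ultimately show False by auto
qed

lemma generic_vanish:
  assumes "poly_on_lines g1" "poly_on_lines g2" "finite S" "0 \<notin> S"
    and "\<And>w. \<forall>r\<in>S. pair3 r w \<noteq> 0 \<Longrightarrow> g1 w * g2 w = 0"
  shows "(\<forall>w. g1 w = 0) \<or> (\<forall>w. g2 w = 0)"
  using product_zero_imp_factor_zero[OF assms(1,2) product_vanishes_everywhere[OF assms]] .

section \<open>A fibration criterion for irreducibility\<close>

text \<open>The fibre of X over a tuple G' of n - 1 lines (with coordinates x) consists of the
  admissible last lines h.\<close>

definition fibre_irreducible ::
    "nat \<Rightarrow> (nat \<Rightarrow> (complex^3) set) set \<Rightarrow> ((nat \<Rightarrow> complex^3) \<Rightarrow> complex^3) set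
      \<Rightarrow> (nat \<Rightarrow> (complex^3) set) \<Rightarrow> (nat \<Rightarrow> complex^3) \<Rightarrow> bool" where
  "fibre_irreducible n X Q G' x \<longleftrightarrow> (\<forall>f1 f2. f1 \<in> polyfun n \<longrightarrow> f2 \<in> polyfun n \<longrightarrow>
     (\<forall>h. h \<noteq> 0 \<longrightarrow> G'(n := proj_pt h) \<in> X \<longrightarrow> f1 (x(n := h)) * f2 (x(n := h)) = 0) \<longrightarrow>
     (\<forall>q\<in>Q. f1 (x(n := q x)) = 0) \<or> (\<forall>q\<in>Q. f2 (x(n := q x)) = 0))"

lemma fibre_irreducible_linear:
  assumes L: "\<And>u v s. L (u + s *s v) = L u + s *s L v"
    and S: "finite S" "0 \<notin> S"
    and generic: "\<And>w. \<forall>r\<in>S. pair3 r w \<noteq> 0 \<Longrightarrow> L w \<noteq> 0 \<and> G'(n := proj_pt (L w)) \<in> X"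
    and Q: "\<And>q. q \<in> Q \<Longrightarrow> q x \<in> range L"
  shows "fibre_irreducible n X Q G' x"
  unfolding fibre_irreducible_def
proof (intro allI impI)
  fix f1 f2
  assume f: "f1 \<in> polyfun n" "f2 \<in> polyfun n"
    and van: "\<forall>h. h \<noteq> 0 \<longrightarrow> G'(n := proj_pt h) \<in> X \<longrightarrow> f1 (x(n := h)) * f2 (x(n := h)) = 0"
  have "(\<forall>w. f1 (x(n := L w)) = 0) \<or> (\<forall>w. f2 (x(n := L w)) = 0)"
  proof (rule generic_vanish[OF poly_on_lines_linear[OF f(1) L] poly_on_lines_linear[OF f(2) L] S])
    show "f1 (x(n := L w)) * f2 (x(n := L w)) = 0" if "\<forall>r\<in>S. pair3 r w \<noteq> 0" for w
      using van generic[OF that] by blast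
  qed
  moreover have "\<exists>w. q x = L w" if "q \<in> Q" for q using Q[OF that] by blast
  ultimately show "(\<forall>q\<in>Q. f1 (x(n := q x)) = 0) \<or> (\<forall>q\<in>Q. f2 (x(n := q x)) = 0)"
    by metis
qed

definition pullback ::
    "nat \<Rightarrow> ((nat \<Rightarrow> complex^3) \<Rightarrow> complex^3) set \<Rightarrow> ((nat \<Rightarrow> complex^3) \<Rightarrow> complex) set
      \<Rightarrow> ((nat \<Rightarrow> complex^3) \<Rightarrow> complex) set" where
  "pullback n Q F = {(\<lambda>x. f (x(n := q x))) | f q. f \<in> F \<and> q \<in> Q}"

lemma hom_polys_pullback:
  assumes "1 \<le> n" "\<And>q. q \<in> Q \<Longrightarrow> poly_map (n - 1) q \<and> hom_map (n - 1) q" "hom_polys n F"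
  shows "hom_polys (n - 1) (pullback n Q F)"
  using assms polyfun_subst_last[OF assms(1)] multihom_subst_last[OF assms(1)]
  unfolding hom_polys_def pullback_def by blast

lemma zero_set_pullback_iff:
  assumes "1 \<le> n" "\<And>q. q \<in> Q \<Longrightarrow> poly_map (n - 1) q \<and> hom_map (n - 1) q" "hom_polys n F"
    and "represents (n - 1) G' x" "G' \<in> Pspace (n - 1)"
  shows "G' \<in> zero_set (n - 1) (pullback n Q F) \<longleftrightarrow> (\<forall>f\<in>F. \<forall>q\<in>Q. f (x(n := q x)) = 0)"
proof -
  have "G' \<in> zero_set (n - 1) (pullback n Q F) \<longleftrightarrow> (\<forall>g\<in>pullback n Q F. g x = 0)"
    using zero_set_mem[OF hom_polys_pullback[OF assms(1-3)] assms(4,5)] .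
  also have "\<dots> \<longleftrightarrow> (\<forall>f\<in>F. \<forall>q\<in>Q. f (x(n := q x)) = 0)"
  proof
    assume "\<forall>g\<in>pullback n Q F. g x = 0"
    moreover have "(\<lambda>x. f (x(n := q x))) \<in> pullback n Q F" if "f \<in> F" "q \<in> Q" for f q
      unfolding pullback_def using that by blast
    ultimately show "\<forall>f\<in>F. \<forall>q\<in>Q. f (x(n := q x)) = 0" by fastforce
  next
    assume "\<forall>f\<in>F. \<forall>q\<in>Q. f (x(n := q x)) = 0"
    thus "\<forall>g\<in>pullback n Q F. g x = 0" unfolding pullback_def by blast
  qed
  finally show ?thesis .
qed

text \<open>If the last vector is a multiple of some q x, vanishing of the pullback at x implies
  vanishing at the tuple itself, by homogeneity in the last block.\<close>

lemma zero_set_lift: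
  assumes "1 \<le> n" "hom_polys n F" "G \<in> Pspace n" "represents n G x" "x n = c *s q x"
    and van: "\<forall>f\<in>F. f (x(n := q x)) = 0"
  shows "G \<in> zero_set n F"
proof -
  have "f x = 0" if f: "f \<in> F" for f
  proof -
    obtain d where d: "\<forall>x c v. f (x(n := c *s v)) = c ^ d * f (x(n := v))"
      using multihom_scale_block[of n f n] assms(1,2) f unfolding hom_polys_def by auto
    have "x = x(n := c *s q x)" using assms(5) by auto
    hence "f x = c ^ d * f (x(n := q x))" using d by metis
    thus "f x = 0" using van f by simp
  qed
  thus ?thesis using zero_set_mem[OF assms(2,4,3)] by blast
qed

lemma fibre_in_one_component:
  assumes "1 \<le> n" "X \<subseteq> Pspace n" "hom_polys n F1" "hom_polys n F2"
    and cover: "X \<subseteq> zero_set n F1 \<union> zero_set n F2"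
    and x: "represents (n - 1) G' x" and fib: "fibre_irreducible n X Q G' x"
  shows "(\<forall>f\<in>F1. \<forall>q\<in>Q. f (x(n := q x)) = 0) \<or> (\<forall>f\<in>F2. \<forall>q\<in>Q. f (x(n := q x)) = 0)"
proof (rule ccontr)
  assume "\<not> ?thesis"
  then obtain f1 q1 f2 q2 where w: "f1 \<in> F1" "q1 \<in> Q" "f1 (x(n := q1 x)) \<noteq> 0"
      "f2 \<in> F2" "q2 \<in> Q" "f2 (x(n := q2 x)) \<noteq> 0"
    by blast
  have "f1 (x(n := h)) * f2 (x(n := h)) = 0" if h: "h \<noteq> 0" "G'(n := proj_pt h) \<in> X" for h
  proof -
    have r: "represents n (G'(n := proj_pt h)) (x(n := h))" using represents_update[OF x h(1)] .
    have P: "G'(n := proj_pt h) \<in> Pspace n" using h assms(2) by blast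
    have "G'(n := proj_pt h) \<in> zero_set n F1 \<union> zero_set n F2" using h cover by blast
    thus ?thesis using zero_set_mem[OF assms(3) r P] zero_set_mem[OF assms(4) r P] w by auto
  qed
  moreover have "f1 \<in> polyfun n" "f2 \<in> polyfun n" using w assms(3,4) unfolding hom_polys_def by auto
  ultimately have "(\<forall>q\<in>Q. f1 (x(n := q x)) = 0) \<or> (\<forall>q\<in>Q. f2 (x(n := q x)) = 0)"
    using fib unfolding fibre_irreducible_def by blast
  thus False using w by blast
qed

lemma zero_set_from_pullback:
  assumes n1: "1 \<le> n" and X: "X \<subseteq> Pspace n"
    and restrict: "\<And>G. G \<in> X \<Longrightarrow> G(n := undefined) \<in> Y"
    and Q: "\<And>q. q \<in> Q \<Longrightarrow> poly_map (n - 1) q \<and> hom_map (n - 1) q"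
    and cover: "\<And>G x. G \<in> X \<Longrightarrow> represents n G x \<Longrightarrow> \<exists>q\<in>Q. \<exists>c. x n = c *s q x"
    and F: "hom_polys n F" and sub: "Y \<subseteq> zero_set (n - 1) (pullback n Q F)"
  shows "X \<subseteq> zero_set n F"
proof
  fix G assume G: "G \<in> X"
  hence P: "G \<in> Pspace n" using X by blast
  obtain x where x: "represents n G x" using represents_exists P by blast
  obtain q c where qc: "q \<in> Q" "x n = c *s q x" using cover G x by blast
  have "G(n := undefined) \<in> zero_set (n - 1) (pullback n Q F)" using restrict G sub by blast
  hence "\<forall>f\<in>F. f (x(n := q x)) = 0"
    using zero_set_pullback_iff[OF n1 Q F represents_restrict[OF x] Pspace_restrict[OF n1 P]] qc
    by blast
  thus "G \<in> zero_set n F" using zero_set_lift[of n F G x c q] n1 F P x qc(2) by blast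
qed

text \<open>Closed sets Z(F1), Z(F2) covering X pull
  back to closed sets covering Y; irreducibility of Y puts Y in one of them, and then X lies in
  the corresponding Z(Fk).\<close>

theorem irreducible_by_fibres:
  assumes n1: "1 \<le> n"
    and Y: "zirreducible (n - 1) Y" "Y \<subseteq> Pspace (n - 1)"
    and X: "X \<subseteq> Pspace n" "X \<noteq> {}"
    and restrict: "\<And>G. G \<in> X \<Longrightarrow> G(n := undefined) \<in> Y"
    and Q: "\<And>q. q \<in> Q \<Longrightarrow> poly_map (n - 1) q \<and> hom_map (n - 1) q"
    and cover: "\<And>G x. G \<in> X \<Longrightarrow> represents n G x \<Longrightarrow> \<exists>q\<in>Q. \<exists>c. x n = c *s q x"
    and fibres: "\<And>G' x. G' \<in> Y \<Longrightarrow> represents (n - 1) G' x \<Longrightarrow> fibre_irreducible n X Q G' x"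
  shows "zirreducible n X"
  unfolding zirreducible_def
proof (intro conjI allI impI)
  show "X \<noteq> {}" by fact
  fix C1 C2 assume C: "zclosed n C1 \<and> zclosed n C2 \<and> X \<subseteq> C1 \<union> C2"
  obtain F1 where F1: "hom_polys n F1" "C1 = zero_set n F1" using C zclosed_iff by blast
  obtain F2 where F2: "hom_polys n F2" "C2 = zero_set n F2" using C zclosed_iff by blast
  have base: "Y \<subseteq> zero_set (n - 1) (pullback n Q F1) \<union> zero_set (n - 1) (pullback n Q F2)"
  proof
    fix G' assume G': "G' \<in> Y"
    hence P: "G' \<in> Pspace (n - 1)" using Y(2) by blast
    obtain x where x: "represents (n - 1) G' x" using represents_exists P by blast
    have "X \<subseteq> zero_set n F1 \<union> zero_set n F2" using C F1 F2 by blast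
    hence "(\<forall>f\<in>F1. \<forall>q\<in>Q. f (x(n := q x)) = 0) \<or> (\<forall>f\<in>F2. \<forall>q\<in>Q. f (x(n := q x)) = 0)"
      using fibre_in_one_component[OF n1 X(1) F1(1) F2(1) _ x fibres[OF G' x]] by blast
    moreover have "G' \<in> zero_set (n - 1) (pullback n Q F1) \<longleftrightarrow> (\<forall>f\<in>F1. \<forall>q\<in>Q. f (x(n := q x)) = 0)"
      by (rule zero_set_pullback_iff[OF n1 Q F1(1) x P])
    moreover have "G' \<in> zero_set (n - 1) (pullback n Q F2) \<longleftrightarrow> (\<forall>f\<in>F2. \<forall>q\<in>Q. f (x(n := q x)) = 0)"
      by (rule zero_set_pullback_iff[OF n1 Q F2(1) x P])
    ultimately show "G' \<in> zero_set (n - 1) (pullback n Q F1) \<union> zero_set (n - 1) (pullback n Q F2)"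
      by blast
  qed
  have lift: "X \<subseteq> zero_set n F" if "hom_polys n F" "Y \<subseteq> zero_set (n - 1) (pullback n Q F)" for F
    using zero_set_from_pullback[OF n1 X(1) restrict Q cover that] .
  have "zclosed (n - 1) (zero_set (n - 1) (pullback n Q Fk))" if "hom_polys n Fk" for Fk
    using hom_polys_pullback[OF n1 Q that] zclosed_iff by blast
  hence "Y \<subseteq> zero_set (n - 1) (pullback n Q F1) \<or> Y \<subseteq> zero_set (n - 1) (pullback n Q F2)"
    using Y(1) base F1(1) F2(1) unfolding zirreducible_def by blast
  thus "X \<subseteq> C1 \<or> X \<subseteq> C2" using lift F1 F2 by blast
qed

definition tdet :: "(nat \<Rightarrow> complex^3) \<Rightarrow> nat \<Rightarrow> nat \<Rightarrow> nat \<Rightarrow> complex" where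
  "tdet x i j k = pair3 (cross (x i) (x j)) (x k)"

lemma tdet_degenerate [simp]: "tdet x i i k = 0" "tdet x i j i = 0" "tdet x i j j = 0"
  unfolding tdet_def by simp_all

lemma tdet_rotate: "tdet x i j k = tdet x j k i"
  unfolding tdet_def by (rule triple_rotate)

lemma tdet_update: "i \<noteq> n \<Longrightarrow> j \<noteq> n \<Longrightarrow> k \<noteq> n \<Longrightarrow> tdet (x(n := h)) i j k = tdet x i j k"
  unfolding tdet_def by simp

lemma tdet_update_last: "i \<noteq> n \<Longrightarrow> j \<noteq> n \<Longrightarrow> tdet (x(n := h)) i j n = pair3 (cross (x i) (x j)) h"
  unfolding tdet_def by simp

definition pairwise_indep :: "nat \<Rightarrow> (nat \<Rightarrow> complex^3) \<Rightarrow> bool" where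
  "pairwise_indep N x \<longleftrightarrow> (\<forall>i\<in>{1..N}. \<forall>j\<in>{1..N}. i \<noteq> j \<longrightarrow> cross (x i) (x j) \<noteq> 0)"

definition same_incidence :: "nat \<Rightarrow> (nat \<Rightarrow> complex^3) \<Rightarrow> (nat \<Rightarrow> complex^3) \<Rightarrow> bool" where
  "same_incidence N x y \<longleftrightarrow> (\<forall>i\<in>{1..N}. \<forall>j\<in>{1..N}. \<forall>k\<in>{1..N}. i \<noteq> j \<and> i \<noteq> k \<and> j \<noteq> k \<longrightarrow>
      (tdet x i j k = 0 \<longleftrightarrow> tdet y i j k = 0))"

lemma inj_on_iff_pairwise_indep:
  assumes "represents N G x" shows "inj_on G {1..N} \<longleftrightarrow> pairwise_indep N x"
  using assms proj_pt_eq_iff unfolding inj_on_def pairwise_indep_def represents_def by metis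

lemma incidence_iff:
  assumes y: "represents N H y"
    and ijk: "i \<in> {1..N}" "j \<in> {1..N}" "k \<in> {1..N}" "i \<noteq> j" "i \<noteq> k" "j \<noteq> k"
  shows "{i, j, k} \<in> incidence N H \<longleftrightarrow> tdet y i j k = 0"
proof -
  have "{i, j, k} \<in> incidence N H \<longleftrightarrow> (\<exists>p\<in>P2. \<forall>l\<in>{i,j,k}. on_line p (H l))"
  proof
    assume "{i, j, k} \<in> incidence N H"
    then obtain a b c p where T: "{i,j,k} = {a,b,c}" "p \<in> P2" "on_line p (H a)" "on_line p (H b)"
        "on_line p (H c)"
      unfolding incidence_def by blast
    hence "\<forall>l\<in>{a,b,c}. on_line p (H l)" by simp
    hence "\<forall>l\<in>{i,j,k}. on_line p (H l)" by (simp only: T(1))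
    thus "\<exists>p\<in>P2. \<forall>l\<in>{i,j,k}. on_line p (H l)" using T(2) by blast
  next
    assume "\<exists>p\<in>P2. \<forall>l\<in>{i,j,k}. on_line p (H l)"
    hence "\<exists>p\<in>P2. on_line p (H i) \<and> on_line p (H j) \<and> on_line p (H k)" by simp
    thus "{i, j, k} \<in> incidence N H" unfolding incidence_def using ijk by blast
  qed
  also have "\<dots> \<longleftrightarrow> (\<exists>p\<in>P2. on_line p (H i) \<and> on_line p (H j) \<and> on_line p (H k))" by simp
  also have "\<dots> \<longleftrightarrow> tdet y i j k = 0"
    using y ijk concurrent_iff[of "y i" "y j" "y k"] unfolding tdet_def represents_def by auto
  finally show ?thesis .
qed

lemma realization_iff:
  assumes y: "represents N H y" and G: "G \<in> Pspace N" and x: "represents N G x"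
  shows "G \<in> realization N (incidence N H) \<longleftrightarrow> pairwise_indep N x \<and> same_incidence N x y"
proof -
  have det: "det0 (G i) (G j) (G k) \<longleftrightarrow> tdet x i j k = 0"
    if "i \<in> {1..N}" "j \<in> {1..N}" "k \<in> {1..N}" for i j k
    using x that det0_iff unfolding tdet_def represents_def by metis
  show ?thesis unfolding realization_def same_incidence_def
    using G inj_on_iff_pairwise_indep[OF x] det incidence_iff[OF y] by auto
qed

lemma same_incidence_all:
  assumes "same_incidence N x y" "i \<in> {1..N}" "j \<in> {1..N}" "k \<in> {1..N}"
  shows "tdet x i j k = 0 \<longleftrightarrow> tdet y i j k = 0"
  using assms unfolding same_incidence_def by (cases "i = j \<or> i = k \<or> j = k") auto

lemma same_incidence_restrict: "same_incidence n x y \<Longrightarrow> same_incidence (n - 1) x y"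
  unfolding same_incidence_def by auto

lemma pairwise_indep_restrict: "pairwise_indep n x \<Longrightarrow> pairwise_indep (n - 1) x"
  unfolding pairwise_indep_def by auto

text \<open>By the cyclic symmetry of the determinant it suffices to compare triples ending in n.\<close>

lemma same_incidence_extend:
  assumes "1 \<le> n" "same_incidence (n - 1) x y"
    and last: "\<forall>i\<in>{1..n-1}. \<forall>j\<in>{1..n-1}. i \<noteq> j \<longrightarrow> (tdet x i j n = 0 \<longleftrightarrow> tdet y i j n = 0)"
  shows "same_incidence n x y"
  unfolding same_incidence_def
proof (intro ballI impI)
  fix i j k assume r: "i \<in> {1..n}" "j \<in> {1..n}" "k \<in> {1..n}" and d: "i \<noteq> j \<and> i \<noteq> k \<and> j \<noteq> k"
  consider "i \<noteq> n" "j \<noteq> n" "k \<noteq> n" | "k = n" | "i = n" | "j = n" by blast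
  thus "tdet x i j k = 0 \<longleftrightarrow> tdet y i j k = 0"
  proof cases
    case 1 thus ?thesis using assms(2) r d unfolding same_incidence_def by auto
  next
    case 2 thus ?thesis using last r d by auto
  next
    case 3
    have "tdet x i j k = 0 \<longleftrightarrow> tdet x j k n = 0" using 3 tdet_rotate by metis
    also have "\<dots> \<longleftrightarrow> tdet y j k n = 0" using last r d 3 by auto
    also have "\<dots> \<longleftrightarrow> tdet y i j k = 0" using 3 tdet_rotate by metis
    finally show ?thesis .
  next
    case 4
    have "tdet x i j k = 0 \<longleftrightarrow> tdet x k i n = 0" using 4 tdet_rotate by metis
    also have "\<dots> \<longleftrightarrow> tdet y k i n = 0" using last r d 4 by auto
    also have "\<dots> \<longleftrightarrow> tdet y i j k = 0" using 4 tdet_rotate by metis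
    finally show ?thesis .
  qed
qed

lemma pairwise_indep_extend:
  assumes "pairwise_indep (n - 1) x" "\<forall>i\<in>{1..n-1}. cross (x n) (x i) \<noteq> 0"
  shows "pairwise_indep n x"
  unfolding pairwise_indep_def
proof (intro ballI impI)
  fix i j assume r: "i \<in> {1..n}" "j \<in> {1..n}" "i \<noteq> j"
  consider "i \<noteq> n" "j \<noteq> n" | "i = n" | "j = n" by blast
  thus "cross (x i) (x j) \<noteq> 0"
  proof cases
    case 1 thus ?thesis using assms(1) r unfolding pairwise_indep_def by auto
  next
    case 2 thus ?thesis using assms(2) r by auto
  next
    case 3
    have "cross (x j) (x i) \<noteq> 0" using assms(2) r 3 by auto
    thus ?thesis using cross_antisym[of "x i" "x j"] by auto
  qed
qed

text \<open>The points x_i \<times> x_j and x_a \<times> x_b coincide iff x_i \<times> x_j lies on the lines x_a and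
  x_b; the latter is a condition on determinants, hence transported by same_incidence.\<close>

lemma cross_cross_zero_iff:
  assumes "cross (x a) (x b) \<noteq> 0"
  shows "cross (cross (x i) (x j)) (cross (x a) (x b)) = 0 \<longleftrightarrow> tdet x i j a = 0 \<and> tdet x i j b = 0"
proof -
  have e: "cross (cross (x i) (x j)) (cross (x a) (x b)) = tdet x i j b *s x a + (- tdet x i j a) *s x b"
    unfolding tdet_def cross_cross_right by (simp add: algebra_simps)
  show ?thesis
  proof
    assume "cross (cross (x i) (x j)) (cross (x a) (x b)) = 0"
    hence "tdet x i j b *s x a + (- tdet x i j a) *s x b = 0" using e by simp
    hence "tdet x i j b = 0 \<and> - tdet x i j a = 0" by (rule cross_nonzero_indep[OF assms])
    thus "tdet x i j a = 0 \<and> tdet x i j b = 0" by simp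
  qed (use e in simp)
qed

lemma same_incidence_transfer:
  assumes "pairwise_indep N x" "pairwise_indep N y" "same_incidence N x y"
    "i \<in> {1..N}" "j \<in> {1..N}" "a \<in> {1..N}" "b \<in> {1..N}" "a \<noteq> b"
  shows "cross (cross (x i) (x j)) (cross (x a) (x b)) = 0 \<longleftrightarrow>
    cross (cross (y i) (y j)) (cross (y a) (y b)) = 0"
proof -
  have "cross (x a) (x b) \<noteq> 0" "cross (y a) (y b) \<noteq> 0"
    using assms unfolding pairwise_indep_def by auto
  thus ?thesis using cross_cross_zero_iff same_incidence_all[OF assms(3)] assms by metis
qed

section \<open>The arrangement and the forgetful map\<close>

text \<open>The family of all constant maps: with no multiple point on H_n, the last line can a priori
  be any line of the plane.\<close>

definition constant_maps :: "((nat \<Rightarrow> complex^3) \<Rightarrow> complex^3) set" where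
  "constant_maps = range (\<lambda>h x. h)"

locale arrangement =
  fixes n :: nat and H :: "nat \<Rightarrow> (complex^3) set" and y :: "nat \<Rightarrow> complex^3"
  assumes n1: "1 \<le> n"
    and y: "represents n H y"
    and indep_y: "pairwise_indep n y"
begin

abbreviation "X \<equiv> realization n (incidence n H)"
abbreviation "X' \<equiv> realization (n - 1) (incidence (n - 1) H)"
abbreviation "M \<equiv> {p \<in> mult_pts n H. on_line p (H n)}"

lemma y_nonzero: "i \<in> {1..n} \<Longrightarrow> y i \<noteq> 0"
  using y unfolding represents_def by auto

lemma y_restrict: "represents (n - 1) H y"
  using y unfolding represents_def by auto

lemma cross_y_nonzero: "i \<in> {1..n} \<Longrightarrow> j \<in> {1..n} \<Longrightarrow> i \<noteq> j \<Longrightarrow> cross (y i) (y j) \<noteq> 0"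
  using indep_y unfolding pairwise_indep_def by auto

lemma X_Pspace: "X \<subseteq> Pspace n"
  unfolding realization_def by auto

lemma X'_Pspace: "X' \<subseteq> Pspace (n - 1)"
  unfolding realization_def by auto

lemma X_iff: "G \<in> Pspace n \<Longrightarrow> represents n G x \<Longrightarrow> G \<in> X \<longleftrightarrow> pairwise_indep n x \<and> same_incidence n x y"
  using realization_iff[OF y] by blast

lemma X'_iff:
  "G \<in> Pspace (n - 1) \<Longrightarrow> represents (n - 1) G x \<Longrightarrow>
    G \<in> X' \<longleftrightarrow> pairwise_indep (n - 1) x \<and> same_incidence (n - 1) x y"
  using realization_iff[OF y_restrict] by blast

lemma X_props:
  assumes "G \<in> X" "represents n G x" shows "pairwise_indep n x" "same_incidence n x y"
  using X_iff assms X_Pspace by blast+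

lemma X'_props:
  assumes "G \<in> X'" "represents (n - 1) G x"
  shows "pairwise_indep (n - 1) x" "same_incidence (n - 1) x y"
  using X'_iff assms X'_Pspace by blast+

lemma X_nonempty: "X \<noteq> {}"
proof -
  define G where "G = (\<lambda>i. if i \<in> {1..n} then H i else undefined)"
  have P: "G \<in> Pspace n" unfolding G_def Pspace_def
    using y P2_iff unfolding represents_def by (auto simp: PiE_iff extensional_def)
  have r: "represents n G y" using y unfolding G_def represents_def by auto
  have "same_incidence n y y" unfolding same_incidence_def by auto
  hence "G \<in> X" using X_iff[OF P r] indep_y by blast
  thus ?thesis by blast
qed

lemma X_restrict: "G \<in> X \<Longrightarrow> G(n := undefined) \<in> X'"
proof -
  assume G: "G \<in> X"
  hence P: "G \<in> Pspace n" using X_Pspace by blast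
  obtain x where x: "represents n G x" using represents_exists P by blast
  have "pairwise_indep n x" "same_incidence n x y" using X_props[OF G x] by auto
  thus ?thesis using X'_iff[OF Pspace_restrict[OF n1 P] represents_restrict[OF x]]
      pairwise_indep_restrict same_incidence_restrict by blast
qed

lemma X_extend:
  assumes G': "G' \<in> X'" and x: "represents (n - 1) G' x" and h: "h \<noteq> 0"
    and new_line: "\<forall>i\<in>{1..n-1}. cross h (x i) \<noteq> 0"
    and incid: "\<forall>i\<in>{1..n-1}. \<forall>j\<in>{1..n-1}. i \<noteq> j \<longrightarrow>
      (pair3 (cross (x i) (x j)) h = 0 \<longleftrightarrow> tdet y i j n = 0)"
  shows "G'(n := proj_pt h) \<in> X"
proof -
  have P': "G' \<in> Pspace (n - 1)" using G' X'_Pspace by blast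
  have P: "G'(n := proj_pt h) \<in> Pspace n" using Pspace_update[OF n1 P'] h P2_iff by blast
  have r: "represents n (G'(n := proj_pt h)) (x(n := h))" using represents_update[OF x h] .
  have old: "pairwise_indep (n - 1) x" "same_incidence (n - 1) x y" using X'_props[OF G' x] by auto
  have "pairwise_indep (n - 1) (x(n := h))" using old unfolding pairwise_indep_def by auto
  moreover have "\<forall>i\<in>{1..n-1}. cross ((x(n := h)) n) ((x(n := h)) i) \<noteq> 0" using new_line by auto
  ultimately have I: "pairwise_indep n (x(n := h))" by (rule pairwise_indep_extend)
  have "same_incidence (n - 1) (x(n := h)) y" using old unfolding same_incidence_def by (auto simp: tdet_update)
  moreover have "\<forall>i\<in>{1..n-1}. \<forall>j\<in>{1..n-1}. i \<noteq> j \<longrightarrow> (tdet (x(n := h)) i j n = 0 \<longleftrightarrow> tdet y i j n = 0)"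
    using incid by (auto simp: tdet_update_last)
  ultimately have S: "same_incidence n (x(n := h)) y" using same_incidence_extend[OF n1] by blast
  show ?thesis using X_iff[OF P r] I S by blast
qed

lemma transfer_to_y:
  assumes "pairwise_indep (n - 1) x" "same_incidence (n - 1) x y"
    "i \<in> {1..n-1}" "j \<in> {1..n-1}" "a \<in> {1..n-1}" "b \<in> {1..n-1}" "a \<noteq> b"
  shows "cross (cross (x i) (x j)) (cross (x a) (x b)) = 0 \<longleftrightarrow>
    cross (cross (y i) (y j)) (cross (y a) (y b)) = 0"
  using same_incidence_transfer[OF assms(1) pairwise_indep_restrict[OF indep_y] assms(2-)] .

lemma on_line_H_iff:
  assumes "l \<in> {1..n}" "v \<noteq> 0" shows "on_line (proj_pt v) (H l) \<longleftrightarrow> pair3 (y l) v = 0"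
  using on_line_iff[OF y_nonzero[OF assms(1)] assms(2)] y assms(1) unfolding represents_def by auto

lemma last_vanish_iff:
  assumes ij: "i \<in> {1..n-1}" "j \<in> {1..n-1}" "i \<noteq> j"
  shows "tdet y i j n = 0 \<longleftrightarrow> proj_pt (cross (y i) (y j)) \<in> M"
proof -
  let ?v = "cross (y i) (y j)"
  have v0: "?v \<noteq> 0" using cross_y_nonzero ij by auto
  have r: "i \<in> {1..n}" "j \<in> {1..n}" "n \<in> {1..n}" using ij n1 by auto
  have on_ij: "on_line (proj_pt ?v) (H i)" "on_line (proj_pt ?v) (H j)"
    using on_line_H_iff[OF r(1) v0] on_line_H_iff[OF r(2) v0] by simp_all
  have on_n: "on_line (proj_pt ?v) (H n) \<longleftrightarrow> tdet y i j n = 0"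
    using on_line_H_iff[OF r(3) v0] pair3_commute[of "y n"] unfolding tdet_def by simp
  have "3 \<le> card {l \<in> {1..n}. on_line (proj_pt ?v) (H l)}" if "on_line (proj_pt ?v) (H n)"
  proof -
    have "{i, j, n} \<subseteq> {l \<in> {1..n}. on_line (proj_pt ?v) (H l)}" using r on_ij that by blast
    moreover have "i \<noteq> n" "j \<noteq> n" using ij n1 by auto
    hence "card {i, j, n} = 3" using ij(3) by simp
    moreover have "finite {l \<in> {1..n}. on_line (proj_pt ?v) (H l)}" by simp
    ultimately show ?thesis using card_mono by metis
  qed
  moreover have "proj_pt ?v \<in> P2" using v0 P2_iff by blast
  ultimately show ?thesis using on_n unfolding mult_pts_def by auto
qed

lemma mult_point_is_meet:
  assumes "p \<in> M"
  shows "\<exists>a b. a \<in> {1..n-1} \<and> b \<in> {1..n-1} \<and> a \<noteq> b \<and> p = proj_pt (cross (y a) (y b))"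
proof -
  define L where "L = {l \<in> {1..n}. on_line p (H l)}"
  have p: "p \<in> P2" "3 \<le> card L" using assms unfolding mult_pts_def L_def by auto
  obtain v where v: "v \<noteq> 0" "p = proj_pt v" using p P2_iff by blast
  have "finite L" unfolding L_def by simp
  have "card L - card {n} \<le> card (L - {n})" by (rule diff_card_le_card_Diff) simp
  hence c2: "2 \<le> card (L - {n})" using p(2) by simp
  hence "L - {n} \<noteq> {}" by (metis card.empty not_numeral_le_zero)
  then obtain a where a: "a \<in> L - {n}" by blast
  have "card (L - {n}) - card {a} \<le> card (L - {n} - {a})" by (rule diff_card_le_card_Diff) simp
  hence "1 \<le> card (L - {n} - {a})" using c2 by simp
  hence "L - {n} - {a} \<noteq> {}" by (metis card.empty not_one_le_zero)
  then obtain b where b: "b \<in> L - {n} - {a}" by blast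
  have ab: "a \<in> {1..n-1}" "b \<in> {1..n-1}" "a \<noteq> b" using a b unfolding L_def by auto
  have "pair3 (y a) v = 0" "pair3 (y b) v = 0"
    using a b on_line_H_iff[OF _ v(1)] v(2) unfolding L_def by auto
  moreover have "cross (y a) (y b) \<noteq> 0" using cross_y_nonzero ab by auto
  ultimately obtain k where k: "v = k *s cross (y a) (y b)" using orth_both_parallel_cross by blast
  hence "k \<noteq> 0" using v by auto
  hence "p = proj_pt (cross (y a) (y b))" using v k proj_pt_scale by simp
  thus ?thesis using ab by blast
qed

lemma same_meet_iff:
  assumes "i \<in> {1..n-1}" "j \<in> {1..n-1}" "i \<noteq> j" "a \<in> {1..n-1}" "b \<in> {1..n-1}" "a \<noteq> b"
  shows "proj_pt (cross (y i) (y j)) = proj_pt (cross (y a) (y b)) \<longleftrightarrow>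
    cross (cross (y i) (y j)) (cross (y a) (y b)) = 0"
  using proj_pt_eq_iff[of "cross (y i) (y j)" "cross (y a) (y b)"] cross_y_nonzero assms by auto

subsection \<open>No multiple point on the last line\<close>

text \<open>Then H_n only has to avoid the old intersection points and the old lines, and to be
  nonzero: finitely many linear conditions on its coordinates w.\<close>

definition avoid_set :: "(nat \<Rightarrow> complex^3) \<Rightarrow> (complex^3) set" where
  "avoid_set x = ((\<lambda>(i, j). cross (x i) (x j)) ` ({1..n-1} \<times> {1..n-1})
     \<union> (\<lambda>i. SOME v. v \<noteq> 0 \<and> pair3 (x i) v = 0) ` {1..n-1} \<union> {vector [1, 0, 0]}) - {0}"

lemma avoid_set_finite: "finite (avoid_set x)" "0 \<notin> avoid_set x"
  unfolding avoid_set_def by auto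

lemma generic_line_admissible:
  assumes M: "M = {}" and G': "G' \<in> X'" and x: "represents (n - 1) G' x"
    and w: "\<forall>r\<in>avoid_set x. pair3 r w \<noteq> 0"
  shows "w \<noteq> 0 \<and> G'(n := proj_pt w) \<in> X"
proof -
  have ix: "pairwise_indep (n - 1) x" using X'_props[OF G' x] by blast
  have x0: "x i \<noteq> 0" if "i \<in> {1..n-1}" for i using x that unfolding represents_def by blast
  define ort where "ort i = (SOME v. v \<noteq> 0 \<and> pair3 (x i) v = 0)" for i
  have ort: "ort i \<noteq> 0 \<and> pair3 (x i) (ort i) = 0" for i
    unfolding ort_def by (rule someI_ex[OF exists_orth])
  have "vector [1, 0, 0] \<in> avoid_set x" unfolding avoid_set_def by (simp add: vec3_zero_iff)
  hence w0: "w \<noteq> 0" using w by auto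
  have new_line: "\<forall>i\<in>{1..n-1}. cross w (x i) \<noteq> 0"
  proof (intro ballI notI)
    fix i assume i: "i \<in> {1..n-1}" and "cross w (x i) = 0"
    hence "cross (x i) w = 0" using cross_antisym[of w "x i"] by simp
    then obtain k where "w = k *s x i" using cross_zero_imp_parallel x0[OF i] by blast
    hence "pair3 (ort i) w = 0" using ort[of i] by (simp add: pair3_commute)
    moreover have "ort i \<in> avoid_set x" using ort[of i] i unfolding avoid_set_def ort_def by auto
    ultimately show False using w by blast
  qed
  have incid: "\<forall>i\<in>{1..n-1}. \<forall>j\<in>{1..n-1}. i \<noteq> j \<longrightarrow>
      (pair3 (cross (x i) (x j)) w = 0 \<longleftrightarrow> tdet y i j n = 0)"
  proof (intro ballI impI)
    fix i j assume ij: "i \<in> {1..n-1}" "j \<in> {1..n-1}" "i \<noteq> j"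
    have "tdet y i j n \<noteq> 0" using last_vanish_iff[OF ij] M by simp
    moreover have "cross (x i) (x j) \<in> avoid_set x"
      unfolding avoid_set_def using ij ix unfolding pairwise_indep_def by auto
    ultimately show "pair3 (cross (x i) (x j)) w = 0 \<longleftrightarrow> tdet y i j n = 0" using w by auto
  qed
  show ?thesis using X_extend[OF G' x w0 new_line incid] w0 by blast
qed

lemma no_point_fibre:
  assumes "M = {}" "G' \<in> X'" "represents (n - 1) G' x"
  shows "fibre_irreducible n X constant_maps G' x"
proof (rule fibre_irreducible_linear[where L = "\<lambda>w. w", OF _ avoid_set_finite[of x]])
  show "u + s *s v = u + s *s v" for u v :: "complex^3" and s :: complex by simp
  show "q x \<in> range (\<lambda>w. w)" if "q \<in> constant_maps" for q
    using that unfolding constant_maps_def by auto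
  show "w \<noteq> 0 \<and> G'(n := proj_pt w) \<in> X" if "\<forall>r\<in>avoid_set x. pair3 r w \<noteq> 0" for w
    using generic_line_admissible[OF assms that] .
qed

lemma irreducible_no_point:
  assumes "M = {}" "zirreducible (n - 1) X'" shows "zirreducible n X"
proof (rule irreducible_by_fibres[OF n1 assms(2) X'_Pspace X_Pspace X_nonempty X_restrict,
      where Q = constant_maps])
  show "poly_map (n - 1) q \<and> hom_map (n - 1) q" if "q \<in> constant_maps" for q
    using that poly_map_const hom_map_const unfolding constant_maps_def by auto
  show "\<exists>q\<in>constant_maps. \<exists>c. x n = c *s q x" for x
    unfolding constant_maps_def by (rule bexI[of _ "\<lambda>_. x n"]) (auto intro: exI[of _ 1])
  show "fibre_irreducible n X constant_maps G' x" if "G' \<in> X'" "represents (n - 1) G' x" for G' x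
    using no_point_fibre[OF assms(1) that] .
qed

end

subsection \<open>One multiple point on the last line\<close>

text \<open>If M = {H_a \<inter> H_b}, then H_n must pass through the point x_a \<times> x_b: the fibre is an open
  part of the pencil of lines through this point.\<close>

locale arrangement_one_point = arrangement +
  fixes a b :: nat
  assumes ab: "a \<in> {1..n-1}" "b \<in> {1..n-1}" "a \<noteq> b"
    and M_one: "M = {proj_pt (cross (y a) (y b))}"
begin

lemma one_point_vanish_iff:
  assumes "i \<in> {1..n-1}" "j \<in> {1..n-1}" "i \<noteq> j"
  shows "tdet y i j n = 0 \<longleftrightarrow> cross (cross (y i) (y j)) (cross (y a) (y b)) = 0"
  using last_vanish_iff[OF assms] same_meet_iff[OF assms ab] M_one by auto

lemma one_point_cover:
  assumes G: "G \<in> X" and x: "represents n G x"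
  shows "\<exists>w. x n = cross (cross (x a) (x b)) w"
proof -
  have ix: "pairwise_indep n x" "same_incidence n x y" using X_props[OF G x] by auto
  have "cross (x a) (x b) \<noteq> 0" using ix(1) ab unfolding pairwise_indep_def by auto
  moreover have "tdet y a b n = 0" using last_vanish_iff[OF ab] M_one by simp
  hence "tdet x a b n = 0" using same_incidence_all[OF ix(2)] ab n1 by auto
  hence "pair3 (cross (x a) (x b)) (x n) = 0" unfolding tdet_def .
  ultimately show ?thesis using orth_in_cross_range by blast
qed

text \<open>Writing P = x_a \<times> x_b, the line P \<times> w of the pencil through P is admissible as soon as it
  differs from the old lines through P and avoids every old intersection point other than P;
  these are finitely many linear conditions on w.\<close>

definition pencil_avoid_set :: "(nat \<Rightarrow> complex^3) \<Rightarrow> (complex^3) set" where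
  "pencil_avoid_set x = (x ` {i \<in> {1..n-1}. pair3 (x i) (cross (x a) (x b)) = 0}
     \<union> (\<lambda>(i, j). cross (cross (x i) (x j)) (cross (x a) (x b))) ` ({1..n-1} \<times> {1..n-1})) - {0}"

lemma pencil_avoid_set_finite: "finite (pencil_avoid_set x)" "0 \<notin> pencil_avoid_set x"
  unfolding pencil_avoid_set_def by auto

lemma pencil_line_admissible:
  assumes G': "G' \<in> X'" and x: "represents (n - 1) G' x"
    and w: "\<forall>r\<in>pencil_avoid_set x. pair3 r w \<noteq> 0"
  shows "cross (cross (x a) (x b)) w \<noteq> 0 \<and> G'(n := proj_pt (cross (cross (x a) (x b)) w)) \<in> X"
proof -
  have ix: "pairwise_indep (n - 1) x" "same_incidence (n - 1) x y" using X'_props[OF G' x] by auto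
  have x0: "x i \<noteq> 0" if "i \<in> {1..n-1}" for i using x that unfolding represents_def by blast
  define P where "P = cross (x a) (x b)"
  have P0: "P \<noteq> 0" using ix ab unfolding pairwise_indep_def P_def by auto
  have vanish_iff: "tdet y i j n = 0 \<longleftrightarrow> cross (cross (x i) (x j)) P = 0"
    if "i \<in> {1..n-1}" "j \<in> {1..n-1}" "i \<noteq> j" for i j
    using one_point_vanish_iff[OF that] transfer_to_y[OF ix that(1,2) ab] unfolding P_def by simp
  have xS: "pair3 (x i) w \<noteq> 0" if "i \<in> {1..n-1}" "pair3 (x i) P = 0" for i
    using w that x0 unfolding pencil_avoid_set_def P_def by auto
  have cS: "pair3 (cross (cross (x i) (x j)) P) w \<noteq> 0"
    if "i \<in> {1..n-1}" "j \<in> {1..n-1}" "cross (cross (x i) (x j)) P \<noteq> 0" for i j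
  proof -
    have "cross (cross (x i) (x j)) P \<in> pencil_avoid_set x"
      using that unfolding pencil_avoid_set_def P_def by auto
    thus ?thesis using w by blast
  qed
  have aS: "pair3 (x a) w \<noteq> 0" using xS[OF ab(1)] unfolding P_def by simp
  have h0: "cross P w \<noteq> 0"
  proof
    assume "cross P w = 0"
    then obtain k where "w = k *s P" using cross_zero_imp_parallel[OF P0] by blast
    hence "pair3 (x a) w = 0" unfolding P_def by simp
    thus False using aS by blast
  qed
  have new_line: "\<forall>i\<in>{1..n-1}. cross (cross P w) (x i) \<noteq> 0"
  proof
    fix i assume i: "i \<in> {1..n-1}"
    have "pair3 (x i) w \<noteq> 0" if "pair3 P (x i) = 0"
      using xS[OF i] that pair3_commute[of P "x i"] by metis
    thus "cross (cross P w) (x i) \<noteq> 0" using cross_cross_nonzero[OF P0 h0] by blast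
  qed
  have incid: "\<forall>i\<in>{1..n-1}. \<forall>j\<in>{1..n-1}. i \<noteq> j \<longrightarrow>
      (pair3 (cross (x i) (x j)) (cross P w) = 0 \<longleftrightarrow> tdet y i j n = 0)"
  proof (intro ballI impI)
    fix i j assume ij: "i \<in> {1..n-1}" "j \<in> {1..n-1}" "i \<noteq> j"
    have "pair3 (cross (x i) (x j)) (cross P w) = pair3 (cross (cross (x i) (x j)) P) w"
      by (rule triple_assoc)
    thus "pair3 (cross (x i) (x j)) (cross P w) = 0 \<longleftrightarrow> tdet y i j n = 0"
      using vanish_iff[OF ij] cS[OF ij(1,2)] by (cases "cross (cross (x i) (x j)) P = 0") auto
  qed
  show ?thesis using X_extend[OF G' x h0 new_line incid] h0 unfolding P_def by blast
qed

lemma one_point_fibre: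
  assumes "G' \<in> X'" "represents (n - 1) G' x"
  shows "fibre_irreducible n X (range (\<lambda>w x. cross (cross (x a) (x b)) w)) G' x"
proof (rule fibre_irreducible_linear[where L = "cross (cross (x a) (x b))", OF _ pencil_avoid_set_finite[of x]])
  show "cross (cross (x a) (x b)) (u + s *s v) = cross (cross (x a) (x b)) u + s *s cross (cross (x a) (x b)) v"
    for u v s by (simp add: cross_add_right)
  show "q x \<in> range (cross (cross (x a) (x b)))" if "q \<in> range (\<lambda>w x. cross (cross (x a) (x b)) w)" for q
    using that by auto
  show "cross (cross (x a) (x b)) w \<noteq> 0 \<and> G'(n := proj_pt (cross (cross (x a) (x b)) w)) \<in> X"
    if "\<forall>r\<in>pencil_avoid_set x. pair3 r w \<noteq> 0" for w
    using pencil_line_admissible[OF assms that] .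
qed

theorem irreducible_one_point:
  assumes "zirreducible (n - 1) X'" shows "zirreducible n X"
proof (rule irreducible_by_fibres[OF n1 assms X'_Pspace X_Pspace X_nonempty X_restrict,
      where Q = "range (\<lambda>w x. cross (cross (x a) (x b)) w)"])
  show "poly_map (n - 1) q \<and> hom_map (n - 1) q" if "q \<in> range (\<lambda>w x. cross (cross (x a) (x b)) w)" for q
    using that ab by (auto intro!: poly_map_cross hom_map_cross poly_map_coord hom_map_coord
        poly_map_const hom_map_const)
  show "\<exists>q\<in>range (\<lambda>w x. cross (cross (x a) (x b)) w). \<exists>c. x n = c *s q x"
    if G: "G \<in> X" and x: "represents n G x" for G x
  proof -
    obtain w where "x n = cross (cross (x a) (x b)) w" using one_point_cover[OF G x] by blast
    thus ?thesis by (intro bexI[OF _ rangeI[of _ w]] exI[of _ 1]) simp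
  qed
  show "fibre_irreducible n X (range (\<lambda>w x. cross (cross (x a) (x b)) w)) G' x"
    if "G' \<in> X'" "represents (n - 1) G' x" for G' x
    using one_point_fibre[OF that] .
qed

end

subsection \<open>Two multiple points on the last line\<close>

text \<open>If M = {H_a \<inter> H_b, H_c \<inter> H_d}, then H_n must be the line joining these two points.  This
  line is admissible over the complement of a closed "bad locus" in X'.\<close>

locale arrangement_two_points = arrangement +
  fixes a b c d :: nat
  assumes ab: "a \<in> {1..n-1}" "b \<in> {1..n-1}" "a \<noteq> b"
    and cd: "c \<in> {1..n-1}" "d \<in> {1..n-1}" "c \<noteq> d"
    and M_two: "M = {proj_pt (cross (y a) (y b)), proj_pt (cross (y c) (y d))}"
    and distinct_points: "proj_pt (cross (y a) (y b)) \<noteq> proj_pt (cross (y c) (y d))"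
begin

definition join_line :: "(nat \<Rightarrow> complex^3) \<Rightarrow> complex^3" where
  "join_line x = cross (cross (x a) (x b)) (cross (x c) (x d))"

lemma join_line_map: "poly_map (n - 1) join_line" "hom_map (n - 1) join_line"
  unfolding join_line_def using ab cd
  by (auto intro!: poly_map_cross hom_map_cross poly_map_coord hom_map_coord)

lemma cross_join_map:
  assumes "i \<in> {1..n-1}"
  shows "poly_map (n - 1) (\<lambda>x. cross (join_line x) (x i))" "hom_map (n - 1) (\<lambda>x. cross (join_line x) (x i))"
  using join_line_map assms by (auto intro!: poly_map_cross hom_map_cross poly_map_coord hom_map_coord)

lemma pair_join_poly:
  assumes "i \<in> {1..n-1}" "j \<in> {1..n-1}"
  shows "(\<lambda>x. pair3 (cross (x i) (x j)) (join_line x)) \<in> polyfun (n - 1)"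
    "multihom (n - 1) (\<lambda>x. pair3 (cross (x i) (x j)) (join_line x))"
  using join_line_map assms
  by (auto intro!: polyfun_pair3 multihom_pair3 poly_map_cross hom_map_cross poly_map_coord hom_map_coord)

lemma two_point_vanish_iff:
  assumes "i \<in> {1..n-1}" "j \<in> {1..n-1}" "i \<noteq> j"
  shows "tdet y i j n = 0 \<longleftrightarrow> cross (cross (y i) (y j)) (cross (y a) (y b)) = 0 \<or>
    cross (cross (y i) (y j)) (cross (y c) (y d)) = 0"
  using last_vanish_iff[OF assms] same_meet_iff[OF assms ab] same_meet_iff[OF assms cd] M_two by auto

lemma join_line_nonzero:
  assumes "pairwise_indep (n - 1) x" "same_incidence (n - 1) x y" shows "join_line x \<noteq> 0"
proof -
  have "cross (cross (y a) (y b)) (cross (y c) (y d)) \<noteq> 0"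
    using same_meet_iff[OF ab cd] distinct_points by simp
  thus ?thesis unfolding join_line_def using transfer_to_y[OF assms ab(1,2) cd] by blast
qed

text \<open>If H_i, H_j, H_n are concurrent, the meet x_i \<times> x_j is one of the two multiple points,
  hence lies on the joining line.\<close>

lemma join_line_through:
  assumes ix: "pairwise_indep (n - 1) x" "same_incidence (n - 1) x y"
    and ij: "i \<in> {1..n-1}" "j \<in> {1..n-1}" "i \<noteq> j" and van: "tdet y i j n = 0"
  shows "pair3 (cross (x i) (x j)) (join_line x) = 0"
proof -
  have on_join: "pair3 (cross (x a) (x b)) (join_line x) = 0" "pair3 (cross (x c) (x d)) (join_line x) = 0"
    unfolding join_line_def by simp_all
  have through: "pair3 (cross (x i) (x j)) (join_line x) = 0"
    if uv: "u \<in> {1..n-1}" "v \<in> {1..n-1}" "u \<noteq> v"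
      and z: "cross (cross (x i) (x j)) (cross (x u) (x v)) = 0"
      and on: "pair3 (cross (x u) (x v)) (join_line x) = 0" for u v
  proof -
    have "cross (x u) (x v) \<noteq> 0" using ix(1) uv unfolding pairwise_indep_def by auto
    moreover have "cross (cross (x u) (x v)) (cross (x i) (x j)) = 0"
      using z cross_antisym[of "cross (x i) (x j)"] by simp
    ultimately obtain k where "cross (x i) (x j) = k *s cross (x u) (x v)"
      using cross_zero_imp_parallel by blast
    thus ?thesis using on by simp
  qed
  have "cross (cross (x i) (x j)) (cross (x a) (x b)) = 0 \<or>
      cross (cross (x i) (x j)) (cross (x c) (x d)) = 0"
    using two_point_vanish_iff[OF ij] van transfer_to_y[OF ix ij(1,2) ab] transfer_to_y[OF ix ij(1,2) cd]
    by blast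
  thus ?thesis using through[OF ab _ on_join(1)] through[OF cd _ on_join(2)] by blast
qed

lemma last_line_on_join:
  assumes G: "G \<in> X" and x: "represents n G x" shows "\<exists>k. x n = k *s join_line x"
proof -
  have ix: "pairwise_indep n x" "same_incidence n x y" using X_props[OF G x] by auto
  have "tdet y a b n = 0" "tdet y c d n = 0"
    using last_vanish_iff[OF ab] last_vanish_iff[OF cd] M_two by auto
  hence "tdet x a b n = 0" "tdet x c d n = 0" using same_incidence_all[OF ix(2)] n1 ab cd by auto
  hence "pair3 (cross (x a) (x b)) (x n) = 0" "pair3 (cross (x c) (x d)) (x n) = 0"
    unfolding tdet_def by auto
  moreover have "join_line x \<noteq> 0"
    using join_line_nonzero pairwise_indep_restrict[OF ix(1)] same_incidence_restrict[OF ix(2)] by blast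
  ultimately show ?thesis using orth_both_parallel_cross unfolding join_line_def by blast
qed

text \<open>The bad locus: the joining line degenerates, coincides with an old line, or passes
  through a meet H_i \<inter> H_j that must not lie on H_n.\<close>

definition bad_locus :: "(nat \<Rightarrow> (complex^3) set) set" where
  "bad_locus = vanishing_locus (n - 1) join_line
     \<union> (\<Union>i\<in>{1..n-1}. vanishing_locus (n - 1) (\<lambda>x. cross (join_line x) (x i)))
     \<union> (\<Union>i\<in>{1..n-1}. \<Union>j\<in>{j \<in> {1..n-1}. tdet y i j n \<noteq> 0}.
          zero_set (n - 1) {\<lambda>x. pair3 (cross (x i) (x j)) (join_line x)})"

lemma bad_locus_closed: "zclosed (n - 1) bad_locus"
proof -
  have "zclosed (n - 1) (vanishing_locus (n - 1) join_line)"
    using vanishing_locus_closed join_line_map by blast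
  moreover have "zclosed (n - 1) (\<Union>i\<in>{1..n-1}. vanishing_locus (n - 1) (\<lambda>x. cross (join_line x) (x i)))"
  proof (rule zclosed_UN)
    show "zclosed (n - 1) (vanishing_locus (n - 1) (\<lambda>x. cross (join_line x) (x i)))"
      if "i \<in> {1..n-1}" for i
      using vanishing_locus_closed cross_join_map[OF that] by blast
  qed simp
  moreover have "zclosed (n - 1) (\<Union>i\<in>{1..n-1}. \<Union>j\<in>{j \<in> {1..n-1}. tdet y i j n \<noteq> 0}.
      zero_set (n - 1) {\<lambda>x. pair3 (cross (x i) (x j)) (join_line x)})"
  proof (intro zclosed_UN)
    show "zclosed (n - 1) (zero_set (n - 1) {\<lambda>x. pair3 (cross (x i) (x j)) (join_line x)})"
      if "i \<in> {1..n-1}" "j \<in> {j \<in> {1..n-1}. tdet y i j n \<noteq> 0}" for i j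
    proof -
      have "j \<in> {1..n-1}" using that(2) by simp
      thus ?thesis using zero_set_single_closed pair_join_poly that(1) by blast
    qed
  qed auto
  ultimately show ?thesis unfolding bad_locus_def by (intro zclosed_Un)
qed

lemma bad_locus_iff:
  assumes G': "G' \<in> Pspace (n - 1)" and x: "represents (n - 1) G' x"
  shows "G' \<in> bad_locus \<longleftrightarrow> join_line x = 0 \<or> (\<exists>i\<in>{1..n-1}. cross (join_line x) (x i) = 0) \<or>
    (\<exists>i\<in>{1..n-1}. \<exists>j\<in>{1..n-1}. tdet y i j n \<noteq> 0 \<and> pair3 (cross (x i) (x j)) (join_line x) = 0)"
    (is "_ \<longleftrightarrow> ?degenerate \<or> ?old_line \<or> ?bad_meet")
proof -
  have m1: "G' \<in> vanishing_locus (n - 1) join_line \<longleftrightarrow> join_line x = 0"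
    by (rule vanishing_locus_mem[OF join_line_map x G'])
  have m2: "G' \<in> vanishing_locus (n - 1) (\<lambda>x. cross (join_line x) (x i)) \<longleftrightarrow> cross (join_line x) (x i) = 0"
    if "i \<in> {1..n-1}" for i
    by (rule vanishing_locus_mem[OF cross_join_map[OF that] x G'])
  have m3: "G' \<in> zero_set (n - 1) {\<lambda>x. pair3 (cross (x i) (x j)) (join_line x)} \<longleftrightarrow>
      pair3 (cross (x i) (x j)) (join_line x) = 0"
    if "i \<in> {1..n-1}" "j \<in> {1..n-1}" for i j
    by (rule zero_set_single_mem[OF pair_join_poly[OF that] x G'])
  show ?thesis
  proof
    assume "G' \<in> bad_locus"
    then consider "G' \<in> vanishing_locus (n - 1) join_line"
      | i where "i \<in> {1..n-1}" "G' \<in> vanishing_locus (n - 1) (\<lambda>x. cross (join_line x) (x i))"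
      | i j where "i \<in> {1..n-1}" "j \<in> {1..n-1}" "tdet y i j n \<noteq> 0"
          "G' \<in> zero_set (n - 1) {\<lambda>x. pair3 (cross (x i) (x j)) (join_line x)}"
      unfolding bad_locus_def by blast
    thus "?degenerate \<or> ?old_line \<or> ?bad_meet"
    proof cases
      case 1 thus ?thesis using m1 by blast
    next
      case (2 i) thus ?thesis using m2[OF 2(1)] by blast
    next
      case (3 i j) thus ?thesis using m3[OF 3(1,2)] by blast
    qed
  next
    assume "?degenerate \<or> ?old_line \<or> ?bad_meet"
    then consider "join_line x = 0"
      | i where "i \<in> {1..n-1}" "cross (join_line x) (x i) = 0"
      | i j where "i \<in> {1..n-1}" "j \<in> {1..n-1}" "tdet y i j n \<noteq> 0"
          "pair3 (cross (x i) (x j)) (join_line x) = 0"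
      by blast
    thus "G' \<in> bad_locus"
    proof cases
      case 1 thus ?thesis using m1 unfolding bad_locus_def by blast
    next
      case (2 i) thus ?thesis using m2[OF 2(1)] unfolding bad_locus_def by blast
    next
      case (3 i j) thus ?thesis using m3[OF 3(1,2)] unfolding bad_locus_def by blast
    qed
  qed
qed

lemma restrict_good:
  assumes G: "G \<in> X" shows "G(n := undefined) \<in> X' - bad_locus"
proof -
  have P: "G \<in> Pspace n" using G X_Pspace by blast
  obtain x where x: "represents n G x" using represents_exists P by blast
  have ix: "pairwise_indep n x" "same_incidence n x y" using X_props[OF G x] by auto
  obtain k where k: "x n = k *s join_line x" using last_line_on_join G x by blast
  have nonzero: "join_line x \<noteq> 0"
    using join_line_nonzero pairwise_indep_restrict[OF ix(1)] same_incidence_restrict[OF ix(2)] by blast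
  have new_line: "\<forall>i\<in>{1..n-1}. cross (join_line x) (x i) \<noteq> 0"
  proof (intro ballI notI)
    fix i assume i: "i \<in> {1..n-1}" "cross (join_line x) (x i) = 0"
    hence "cross (x n) (x i) = 0" using k by simp
    thus False using ix(1) i n1 unfolding pairwise_indep_def by auto
  qed
  have good_meets: "\<forall>i\<in>{1..n-1}. \<forall>j\<in>{1..n-1}. tdet y i j n \<noteq> 0 \<longrightarrow>
      pair3 (cross (x i) (x j)) (join_line x) \<noteq> 0"
  proof (intro ballI impI notI)
    fix i j assume ij: "i \<in> {1..n-1}" "j \<in> {1..n-1}" "tdet y i j n \<noteq> 0"
      "pair3 (cross (x i) (x j)) (join_line x) = 0"
    hence "tdet x i j n = 0" unfolding tdet_def using k by simp
    hence "tdet y i j n = 0" using same_incidence_all[OF ix(2)] ij n1 by auto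
    thus False using ij by blast
  qed
  have "G(n := undefined) \<notin> bad_locus"
    using bad_locus_iff[OF Pspace_restrict[OF n1 P] represents_restrict[OF x]] nonzero new_line good_meets
    by blast
  thus ?thesis using X_restrict[OF G] by blast
qed

lemma two_point_fibre:
  assumes G': "G' \<in> X' - bad_locus" and x: "represents (n - 1) G' x"
  shows "fibre_irreducible n X {join_line} G' x"
proof -
  have G'X: "G' \<in> X'" and P: "G' \<in> Pspace (n - 1)" using G' X'_Pspace by auto
  have good: "join_line x \<noteq> 0" "\<forall>i\<in>{1..n-1}. cross (join_line x) (x i) \<noteq> 0"
      "\<forall>i\<in>{1..n-1}. \<forall>j\<in>{1..n-1}. tdet y i j n \<noteq> 0 \<longrightarrow> pair3 (cross (x i) (x j)) (join_line x) \<noteq> 0"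
    using bad_locus_iff[OF P x] G' by blast+
  have ix: "pairwise_indep (n - 1) x" "same_incidence (n - 1) x y" using X'_props[OF G'X x] by auto
  have "\<forall>i\<in>{1..n-1}. \<forall>j\<in>{1..n-1}. i \<noteq> j \<longrightarrow>
      (pair3 (cross (x i) (x j)) (join_line x) = 0 \<longleftrightarrow> tdet y i j n = 0)"
    using good(3) join_line_through[OF ix] by blast
  hence ext: "G'(n := proj_pt (join_line x)) \<in> X" using X_extend[OF G'X x good(1,2)] by blast
  show ?thesis unfolding fibre_irreducible_def
  proof (intro allI impI)
    fix f1 f2 assume "f1 \<in> polyfun n" "f2 \<in> polyfun n"
      and "\<forall>h. h \<noteq> 0 \<longrightarrow> G'(n := proj_pt h) \<in> X \<longrightarrow> f1 (x(n := h)) * f2 (x(n := h)) = 0"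
    hence "f1 (x(n := join_line x)) * f2 (x(n := join_line x)) = 0" using good(1) ext by blast
    thus "(\<forall>q\<in>{join_line}. f1 (x(n := q x)) = 0) \<or> (\<forall>q\<in>{join_line}. f2 (x(n := q x)) = 0)" by simp
  qed
qed

theorem irreducible_two_points:
  assumes irr: "zirreducible (n - 1) X'" shows "zirreducible n X"
proof -
  obtain G where "G \<in> X" using X_nonempty by blast
  hence "X' - bad_locus \<noteq> {}" using restrict_good by blast
  hence Y: "zirreducible (n - 1) (X' - bad_locus)"
    using zirreducible_diff_closed[OF irr bad_locus_closed] by blast
  show ?thesis
  proof (rule irreducible_by_fibres[OF n1 Y _ X_Pspace X_nonempty restrict_good, where Q = "{join_line}"])
    show "X' - bad_locus \<subseteq> Pspace (n - 1)" using X'_Pspace by blast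
    show "poly_map (n - 1) q \<and> hom_map (n - 1) q" if "q \<in> {join_line}" for q
      using that join_line_map by simp
    show "\<exists>q\<in>{join_line}. \<exists>c. x n = c *s q x" if "G \<in> X" "represents n G x" for G x
      using last_line_on_join[OF that] by simp
    show "fibre_irreducible n X {join_line} G' x" if "G' \<in> X' - bad_locus" "represents (n - 1) G' x" for G' x
      using two_point_fibre[OF that] .
  qed
qed

end

lemma card_le_2_cases:
  assumes "finite A" "card A \<le> 2"
  obtains "A = {}" | p where "A = {p}" | p q where "A = {p, q}" "p \<noteq> q"
proof -
  consider "card A = 0" | "card A = 1" | "card A = 2" using assms(2) by linarith
  thus ?thesis
  proof cases
    case 1 hence "A = {}" using assms(1) by simp
    thus ?thesis by (rule that(1))
  next
    case 2 then obtain p where "A = {p}" by (auto simp: card_1_singleton_iff)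
    thus ?thesis by (rule that(2))
  next
    case 3 then obtain p q where "A = {p, q}" "p \<noteq> q" by (auto simp: card_2_iff)
    thus ?thesis by (rule that(3))
  qed
qed

context arrangement
begin

theorem irreducible_if_few_mult_points:
  assumes "finite M" "card M \<le> 2" "zirreducible (n - 1) X'" shows "zirreducible n X"
  using assms(1,2)
proof (cases rule: card_le_2_cases)
  case 1 thus ?thesis using irreducible_no_point assms(3) by blast
next
  case (2 p)
  hence "p \<in> M" by simp
  then obtain a b where ab: "a \<in> {1..n-1}" "b \<in> {1..n-1}" "a \<noteq> b" "p = proj_pt (cross (y a) (y b))"
    using mult_point_is_meet by blast
  have M_one: "M = {proj_pt (cross (y a) (y b))}" using 2 ab(4) by simp
  interpret arrangement_one_point n H y a b
    using arrangement_axioms ab(1-3) M_one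
    by (simp add: arrangement_one_point_def arrangement_one_point_axioms_def)
  show ?thesis using irreducible_one_point assms(3) .
next
  case (3 p q)
  hence "p \<in> M" "q \<in> M" by simp_all
  then obtain a b c d where ab: "a \<in> {1..n-1}" "b \<in> {1..n-1}" "a \<noteq> b" "p = proj_pt (cross (y a) (y b))"
    and cd: "c \<in> {1..n-1}" "d \<in> {1..n-1}" "c \<noteq> d" "q = proj_pt (cross (y c) (y d))"
    using mult_point_is_meet by meson
  have M_two: "M = {proj_pt (cross (y a) (y b)), proj_pt (cross (y c) (y d))}"
    and distinct: "proj_pt (cross (y a) (y b)) \<noteq> proj_pt (cross (y c) (y d))"
    using 3 ab(4) cd(4) by simp_all
  interpret arrangement_two_points n H y a b c d
    using arrangement_axioms ab(1-3) cd(1-3) M_two distinct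
    by (simp add: arrangement_two_points_def arrangement_two_points_axioms_def)
  show ?thesis using irreducible_two_points assms(3) .
qed

end

theorem lemma1:
  fixes n :: nat and H :: "nat \<Rightarrow> (complex^3) set"
  assumes "1 \<le> n"
    and "\<forall>i\<in>{1..n}. H i \<in> P2"
    and "inj_on H {1..n}"
    and "finite {p \<in> mult_pts n H. on_line p (H n)}"
    and "card {p \<in> mult_pts n H. on_line p (H n)} \<le> 2"
    and "zirreducible (n - 1) (realization (n - 1) (incidence (n - 1) H))"
  shows "zirreducible n (realization n (incidence n H))"
proof -
  obtain y where y: "represents n H y" using represents_exists_P2[OF assms(2)] by blast
  have indep: "pairwise_indep n y" using assms(3) inj_on_iff_pairwise_indep[OF y] by blast
  interpret arrangement n H y using assms(1) y indep by (simp add: arrangement_def)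
  show ?thesis using irreducible_if_few_mult_points assms(4-6) .
qed

end
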